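(* Let $m\ge2$ and $p\in\{1,\ldots,m-1\}$, and let $\mathbb{L}^pu=\mathrm{d}_tu+ia(t)\wedge P(x,D_x)u$ be as in the context. Then $\mathbb{L}^p$ is not globally hypoelliptic, i.e. there exists $u\in\mathscr{F}'_{\mu,p}\setminus\mathscr{F}_{\mu,p}$ with $\mathbb{L}^pu\in\mathscr{F}_{\mu,p+1}$.
   Context: $\mathbb{T}^m=(\mathbb{R}/2\pi\mathbb{Z})^m$ with variable $t$, $x\in\mathbb{R}^n$. For $\sigma>1$, $\mathcal{G}^\sigma(\mathbb{T}^m)$ is the space of smooth $\varphi$ on $\mathbb{T}^m$ with $\sup_t|\partial^\gamma\varphi(t)|\le Ch^{|\gamma|}(\gamma!)^\sigma$ for all $\gamma$, some $C,h>0$. $a(t)=\sum_{r=1}^m a_r(t)\mathrm{d}t_r$ is a closed $1$-form with real-valued coefficients in $\mathcal{G}^\sigma(\mathbb{T}^m)$ for some $\sigma>1$. $P(x,D_x)=\sum_{|\alpha|+|\beta|\le M}c_{\alpha,\beta}x^\beta\partial_x^\alpha$ ($c_{\alpha,\beta}\in\mathbb{C}$, $M\ge2$) is normal and globally elliptic ($\sum_{|\alpha|+|\beta|=M}c_{\alpha,\beta}x^\beta\xi^\alpha\ne0$ for $(x,\xi)\ne0$); it has discrete real spectrum $\{\lambda_j\}_{j\in\mathbb{N}}$, $|\lambda_j|\to\infty$, with eigenfunctions $\varphi_j\in\mathcal{S}^{1/2}_{1/2}(\mathbb{R}^n)$ forming an orthonormal basis of $L^2(\mathbb{R}^n)$.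 Fix $\mu\ge1/2$. For $\sigma>1,C>0$, $\mathcal{S}_{\sigma,\mu,C}$ is the Banach space of smooth $u$ on $\mathbb{T}^m\times\mathbb{R}^n$ with $\sup_{\alpha,\beta,\gamma}C^{-|\alpha+\beta|-|\gamma|}\gamma!^{-\sigma}(\alpha!\beta!)^{-\mu}\sup_{(t,x)}|x^\alpha\partial_x^\beta\partial_t^\gamma u|<\infty$; $\mathscr{F}_\mu=\bigcup_{\sigma>1}\bigcup_{C>0}\mathcal{S}_{\sigma,\mu,C}$ with inductive limit topology, $\mathscr{F}'_\mu$ its strong dual. $\mathscr{F}_{\mu,p}$ ($\mathscr{F}'_{\mu,p}$) is the space of $p$-forms $\sum_{|K|=p}u_K\mathrm{d}t_K$ in $\mathrm{d}t$ only with coefficients in $\mathscr{F}_\mu$ ($\mathscr{F}'_\mu$). $P$ acts on the coefficients, $\mathrm{d}_t$ is the exterior derivative in $t$. Global hypoellipticity of $\mathbb{L}^p$ means: $u\in\mathscr{F}'_{\mu,p}$ and $\mathbb{L}^pu\in\mathscr{F}_{\mu,p+1}$ imply $u\in\mathscr{F}_{\mu,p}$. *)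

theory Defs
  imports "HOL-Analysis.Analysis"
begin

definition pd :: "'a::euclidean_space \<Rightarrow> ('a \<Rightarrow> 'b::real_normed_vector) \<Rightarrow> 'a \<Rightarrow> 'b" where
  "pd v f y = vector_derivative (\<lambda>s::real. f (y + s *\<^sub>R v)) (at 0)"

definition pds :: "'a::euclidean_space list \<Rightarrow> ('a \<Rightarrow> 'b::real_normed_vector) \<Rightarrow> 'a \<Rightarrow> 'b" where
  "pds vs f = foldr pd vs f"

definition smooth :: "('a::euclidean_space \<Rightarrow> 'b::real_normed_vector) \<Rightarrow> bool" where
  "smooth f \<longleftrightarrow> (\<forall>vs. set vs \<subseteq> Basis \<longrightarrow> (\<forall>y. pds vs f differentiable (at y)))"

definition idx_list :: "('k::{finite,linorder} \<Rightarrow> nat) \<Rightarrow> 'k list" where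
  "idx_list \<alpha> = concat (map (\<lambda>i. replicate (\<alpha> i) i) (sorted_list_of_set (UNIV :: 'k set)))"

definition mabs :: "('k::finite \<Rightarrow> nat) \<Rightarrow> nat" where
  "mabs \<alpha> = (\<Sum>i\<in>UNIV. \<alpha> i)"

definition mfact :: "('k::finite \<Rightarrow> nat) \<Rightarrow> real" where
  "mfact \<alpha> = (\<Prod>i\<in>UNIV. fact (\<alpha> i))"

definition mpow :: "(real, 'k::finite) vec \<Rightarrow> ('k \<Rightarrow> nat) \<Rightarrow> real" where
  "mpow x \<alpha> = (\<Prod>i\<in>UNIV. (x $ i) ^ \<alpha> i)"

definition Dk :: "('k::{finite,linorder} \<Rightarrow> nat) \<Rightarrow> ((real, 'k) vec \<Rightarrow> 'b::real_normed_vector) \<Rightarrow> (real, 'k) vec \<Rightarrow> 'b" where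
  "Dk \<gamma> f = pds (map (\<lambda>i. axis i (1::real)) (idx_list \<gamma>)) f"

definition dirs_t :: "('m::{finite,linorder} \<Rightarrow> nat) \<Rightarrow> ((real, 'm) vec \<times> (real, 'n::{finite,linorder}) vec) list" where
  "dirs_t \<gamma> = map (\<lambda>r. (axis r (1::real), 0)) (idx_list \<gamma>)"

definition dirs_x :: "('n::{finite,linorder} \<Rightarrow> nat) \<Rightarrow> ((real, 'm::{finite,linorder}) vec \<times> (real, 'n) vec) list" where
  "dirs_x \<beta> = map (\<lambda>i. (0, axis i (1::real))) (idx_list \<beta>)"

text \<open>Functions on \<open>\<real>^m\<close> that are \<open>2\<pi>\<close>-periodic in each variable = functions on \<open>\<T>^m\<close>.\<close>
definition gevrey_torus :: "real \<Rightarrow> ((real, 'm::{finite,linorder}) vec \<Rightarrow> real) \<Rightarrow> bool" where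
  "gevrey_torus \<sigma> f \<longleftrightarrow> smooth f \<and>
     (\<forall>r t. f (t + (2*pi) *\<^sub>R axis r 1) = f t) \<and>
     (\<exists>C h. C > 0 \<and> h > 0 \<and>
        (\<forall>\<gamma> t. \<bar>Dk \<gamma> f t\<bar> \<le> C * h ^ mabs \<gamma> * mfact \<gamma> powr \<sigma>))"

text \<open>A real 1-form \<open>a = \<Sum>_r a_r dt_r\<close> is closed.\<close>
definition closed_1form :: "('m::{finite,linorder} \<Rightarrow> (real, 'm) vec \<Rightarrow> real) \<Rightarrow> bool" where
  "closed_1form a \<longleftrightarrow> (\<forall>r s t. pd (axis s 1) (a r) t = pd (axis r 1) (a s) t)"

text \<open>Coefficients \<open>c \<alpha> \<beta>\<close> of \<open>P = \<Sum>_{|\<alpha>|+|\<beta>|\<le>M} c_{\<alpha>\<beta>} x^\<beta> \<partial>_x^\<alpha>\<close>.\<close>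
definition midx_le :: "nat \<Rightarrow> (('n::finite \<Rightarrow> nat) \<times> ('n \<Rightarrow> nat)) set" where
  "midx_le M = {(\<alpha>, \<beta>). mabs \<alpha> + mabs \<beta> \<le> M}"

definition midx_eq :: "nat \<Rightarrow> (('n::finite \<Rightarrow> nat) \<times> ('n \<Rightarrow> nat)) set" where
  "midx_eq M = {(\<alpha>, \<beta>). mabs \<alpha> + mabs \<beta> = M}"

definition Pop :: "(('n::{finite,linorder} \<Rightarrow> nat) \<Rightarrow> ('n \<Rightarrow> nat) \<Rightarrow> complex) \<Rightarrow> nat
                    \<Rightarrow> ((real, 'n) vec \<Rightarrow> complex) \<Rightarrow> (real, 'n) vec \<Rightarrow> complex" where
  "Pop c M f x = (\<Sum>(\<alpha>, \<beta>)\<in>midx_le M. c \<alpha> \<beta> * (complex_of_real (mpow x \<beta>) * Dk \<alpha> f x))"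

definition Padj :: "(('n::{finite,linorder} \<Rightarrow> nat) \<Rightarrow> ('n \<Rightarrow> nat) \<Rightarrow> complex) \<Rightarrow> nat
                    \<Rightarrow> ((real, 'n) vec \<Rightarrow> complex) \<Rightarrow> (real, 'n) vec \<Rightarrow> complex" where
  "Padj c M f x = (\<Sum>(\<alpha>, \<beta>)\<in>midx_le M.
      cnj (c \<alpha> \<beta>) * (-1) ^ mabs \<alpha> * Dk \<alpha> (\<lambda>z. complex_of_real (mpow z \<beta>) * f z) x)"

text \<open>Formal transpose of P (for the bilinear pairing).\<close>
definition Ptr :: "(('n::{finite,linorder} \<Rightarrow> nat) \<Rightarrow> ('n \<Rightarrow> nat) \<Rightarrow> complex) \<Rightarrow> nat
                    \<Rightarrow> ((real, 'n) vec \<Rightarrow> complex) \<Rightarrow> (real, 'n) vec \<Rightarrow> complex" where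
  "Ptr c M f x = (\<Sum>(\<alpha>, \<beta>)\<in>midx_le M.
      c \<alpha> \<beta> * (-1) ^ mabs \<alpha> * Dk \<alpha> (\<lambda>z. complex_of_real (mpow z \<beta>) * f z) x)"

text \<open>Global ellipticity of order M (principal symbol nonvanishing off the origin).\<close>
definition globally_elliptic :: "(('n::finite \<Rightarrow> nat) \<Rightarrow> ('n \<Rightarrow> nat) \<Rightarrow> complex) \<Rightarrow> nat \<Rightarrow> bool" where
  "globally_elliptic c M \<longleftrightarrow>
     (\<forall>x \<xi> :: (real, 'n) vec. (x, \<xi>) \<noteq> 0 \<longrightarrow>
        (\<Sum>(\<alpha>, \<beta>)\<in>midx_eq M. c \<alpha> \<beta> * complex_of_real (mpow x \<beta> * mpow \<xi> \<alpha>)) \<noteq> 0)"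

definition normal_op :: "(('n::{finite,linorder} \<Rightarrow> nat) \<Rightarrow> ('n \<Rightarrow> nat) \<Rightarrow> complex) \<Rightarrow> nat \<Rightarrow> bool" where
  "normal_op c M \<longleftrightarrow>
     (\<forall>f :: (real, 'n) vec \<Rightarrow> complex. smooth f \<longrightarrow> Pop c M (Padj c M f) = Padj c M (Pop c M f))"

definition GS_half :: "((real, 'n::{finite,linorder}) vec \<Rightarrow> complex) \<Rightarrow> bool" where
  "GS_half f \<longleftrightarrow> smooth f \<and> (\<exists>C>0. \<forall>\<alpha> \<beta> x.
      \<bar>mpow x \<alpha>\<bar> * norm (Dk \<beta> f x) \<le> C ^ (mabs \<alpha> + mabs \<beta> + 1) * (mfact \<alpha> * mfact \<beta>) powr (1/2))"

definition real_spectral_basis :: "(('n::{finite,linorder} \<Rightarrow> nat) \<Rightarrow> ('n \<Rightarrow> nat) \<Rightarrow> complex) \<Rightarrow> nat \<Rightarrow> bool" where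
  "real_spectral_basis c M \<longleftrightarrow>
     (\<exists>(lam::nat \<Rightarrow> real) (\<phi>::nat \<Rightarrow> (real, 'n) vec \<Rightarrow> complex).
        (\<forall>j. GS_half (\<phi> j) \<and> Pop c M (\<phi> j) = (\<lambda>x. complex_of_real (lam j) * \<phi> j x)) \<and>
        filterlim (\<lambda>j. \<bar>lam j\<bar>) at_top sequentially \<and>
        (\<forall>j k. integrable lborel (\<lambda>x. \<phi> j x * cnj (\<phi> k x)) \<and>
               (LINT x|lborel. \<phi> j x * cnj (\<phi> k x)) = (if j = k then 1 else 0)) \<and>
        (\<forall>f :: (real, 'n) vec \<Rightarrow> complex. f \<in> borel_measurable lborel \<and>
               integrable lborel (\<lambda>x. (norm (f x))\<^sup>2) \<and>
               (\<forall>j. (LINT x|lborel. f x * cnj (\<phi> j x)) = 0)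
               \<longrightarrow> (AE x in lborel. f x = 0)))"

type_synonym ('m, 'n) fn = "(real, 'm) vec \<times> (real, 'n) vec \<Rightarrow> complex"

definition t_periodic :: "('m::finite, 'n::finite) fn \<Rightarrow> bool" where
  "t_periodic u \<longleftrightarrow> (\<forall>r t x. u (t + (2*pi) *\<^sub>R axis r 1, x) = u (t, x))"

text \<open>\<open>B\<close> bounds the \<open>\<S>_{\<sigma>,\<mu>,C}\<close> norm of \<open>u\<close> (the norm is the least such \<open>B\<close>).\<close>
definition S_bound :: "real \<Rightarrow> real \<Rightarrow> real \<Rightarrow> ('m::{finite,linorder}, 'n::{finite,linorder}) fn \<Rightarrow> real \<Rightarrow> bool" where
  "S_bound \<sigma> \<mu> C u B \<longleftrightarrow>
     (\<forall>(\<alpha>::'n \<Rightarrow> nat) (\<beta>::'n \<Rightarrow> nat) (\<gamma>::'m \<Rightarrow> nat) t x.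
        \<bar>mpow x \<alpha>\<bar> * norm (pds (dirs_x \<beta> @ dirs_t \<gamma>) u (t, x))
          \<le> B * C ^ (mabs \<alpha> + mabs \<beta> + mabs \<gamma>) * mfact \<gamma> powr \<sigma> * (mfact \<alpha> * mfact \<beta>) powr \<mu>)"

definition S_space :: "real \<Rightarrow> real \<Rightarrow> real \<Rightarrow> ('m::{finite,linorder}, 'n::{finite,linorder}) fn set" where
  "S_space \<sigma> \<mu> C = {u. smooth u \<and> t_periodic u \<and> (\<exists>B. S_bound \<sigma> \<mu> C u B)}"

definition F_space :: "real \<Rightarrow> ('m::{finite,linorder}, 'n::{finite,linorder}) fn set" where
  "F_space \<mu> = (\<Union>\<sigma>\<in>{1<..}. \<Union>C\<in>{0<..}. S_space \<sigma> \<mu> C)"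

text \<open>Elements of \<open>\<F>'_\<mu>\<close>: linear functionals on \<open>\<F>_\<mu>\<close> continuous for the inductive limit
  topology, i.e. continuous on each Banach space \<open>\<S>_{\<sigma>,\<mu>,C}\<close>.\<close>
definition F_dual :: "real \<Rightarrow> (('m::{finite,linorder}, 'n::{finite,linorder}) fn \<Rightarrow> complex) \<Rightarrow> bool" where
  "F_dual \<mu> T \<longleftrightarrow>
     (\<forall>\<phi>\<in>F_space \<mu>. \<forall>\<psi>\<in>F_space \<mu>. \<forall>a b.
        T (\<lambda>y. a * \<phi> y + b * \<psi> y) = a * T \<phi> + b * T \<psi>) \<and>
     (\<forall>\<sigma>>1. \<forall>C>0. \<exists>K. \<forall>\<phi> B. \<phi> \<in> S_space \<sigma> \<mu> C \<longrightarrow> S_bound \<sigma> \<mu> C \<phi> B \<longrightarrow> norm (T \<phi>) \<le> K * B)"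

text \<open>Embedding of functions into distributions: \<open>\<langle>f,\<phi>\<rangle> = \<integral>_{\<T>^m\<times>\<real>^n} f \<phi>\<close>.\<close>
definition pairing :: "('m::finite, 'n::finite) fn \<Rightarrow> ('m, 'n) fn \<Rightarrow> complex" where
  "pairing f \<phi> = (LINT y:(cbox (0::(real, 'm) vec) (\<chi> r. 2*pi) \<times> UNIV)|lborel. f y * \<phi> y)"

definition represented_by_F :: "real \<Rightarrow> (('m::{finite,linorder}, 'n::{finite,linorder}) fn \<Rightarrow> complex) \<Rightarrow> bool" where
  "represented_by_F \<mu> T \<longleftrightarrow> (\<exists>f\<in>F_space \<mu>. \<forall>\<phi>\<in>F_space \<mu>. T \<phi> = pairing f \<phi>)"

text \<open>A p-form \<open>\<Sum>_{|K|=p} u_K dt_K\<close> of distributions is represented by \<open>K \<mapsto> u_K\<close>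
  (only sets \<open>K\<close> with \<open>card K = p\<close> matter).\<close>
type_synonym ('m, 'n) dform = "'m set \<Rightarrow> (('m, 'n) fn \<Rightarrow> complex)"

definition F_dual_form :: "real \<Rightarrow> nat \<Rightarrow> ('m::{finite,linorder}, 'n::{finite,linorder}) dform \<Rightarrow> bool" where
  "F_dual_form \<mu> p u \<longleftrightarrow> (\<forall>K. card K = p \<longrightarrow> F_dual \<mu> (u K))"

definition F_form :: "real \<Rightarrow> nat \<Rightarrow> ('m::{finite,linorder}, 'n::{finite,linorder}) dform \<Rightarrow> bool" where
  "F_form \<mu> p u \<longleftrightarrow> (\<forall>K. card K = p \<longrightarrow> represented_by_F \<mu> (u K))"

text \<open>Sign of \<open>dt_r \<and> dt_{J-{r}}\<close> relative to \<open>dt_J\<close> (increasing order).\<close>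
definition ins_sign :: "'m::linorder \<Rightarrow> 'm set \<Rightarrow> complex" where
  "ins_sign r J = (-1) ^ card {s\<in>J. s < r}"

definition Ptr_tx :: "(('n::{finite,linorder} \<Rightarrow> nat) \<Rightarrow> ('n \<Rightarrow> nat) \<Rightarrow> complex) \<Rightarrow> nat
                       \<Rightarrow> ('m::finite, 'n) fn \<Rightarrow> ('m, 'n) fn" where
  "Ptr_tx c M \<phi> y = Ptr c M (\<lambda>x. \<phi> (fst y, x)) (snd y)"

text \<open>\<open>\<LL>^p u = d_t u + i a(t) \<and> P u\<close> on forms of distributions, defined by transposition:
  \<open>\<langle>\<partial>_{t_r} T,\<phi>\<rangle> = -T(\<partial>_{t_r}\<phi>)\<close>, \<open>\<langle>a_r P T,\<phi>\<rangle> = T(P^t(a_r\<phi>))\<close>.\<close>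
definition Lop :: "(('n::{finite,linorder} \<Rightarrow> nat) \<Rightarrow> ('n \<Rightarrow> nat) \<Rightarrow> complex) \<Rightarrow> nat
                   \<Rightarrow> ('m::{finite,linorder} \<Rightarrow> (real, 'm) vec \<Rightarrow> real)
                   \<Rightarrow> ('m, 'n) dform \<Rightarrow> ('m, 'n) dform" where
  "Lop c M a u J = (\<lambda>\<phi>. \<Sum>r\<in>J. ins_sign r J *
      (- u (J - {r}) (pd (axis r (1::real), 0) \<phi>)
       + \<i> * u (J - {r}) (Ptr_tx c M (\<lambda>y. complex_of_real (a r (fst y)) * \<phi> y))))"

end

theory Submission
  imports Defs "HOL-Library.Multiset"
begin

(*
  Let delta be the (p-1)-form whose only component, at an index set K0 not containing r0, is the
  Dirac mass at (0, x0), and put u = L delta. Closedness of a makes L a complex, L L = 0: the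
  t-derivatives commute, the transpose of P commutes with multiplication by functions of t, and
  the mixed terms cancel because d_r a_s = d_s a_r. Hence L u = 0. Each component of u is
  continuous on every space S_{sigma,mu,C}, since it only evaluates a first t-derivative and
  x-derivatives of order at most M at a single point. But u is not a function: tested against
  exp(i k t_r0) h(x), with h a Gelfand-Shilov function such that h(x0) is nonzero, its component
  on the index set K0 with r0 added has size about k |h(x0)|, whereas the pairing with any fixed function is bounded
  uniformly in k.
*)

lemma pds_Nil [simp]: "pds [] f = f"
  by (simp add: pds_def)

lemma pds_Cons [simp]: "pds (v # vs) f = pd v (pds vs f)"
  by (simp add: pds_def)

lemma pds_append: "pds (xs @ ys) f = pds xs (pds ys f)"
  by (simp add: pds_def)

lemma has_vector_derivative_along_line:
  fixes F :: "'a::euclidean_space \<Rightarrow> 'b::real_normed_vector"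
  assumes "(F has_derivative F') (at (w + s *\<^sub>R v))"
  shows "((\<lambda>\<tau>. F (w + \<tau> *\<^sub>R v)) has_vector_derivative F' v) (at s within S)"
proof -
  have "((\<lambda>\<tau>. w + \<tau> *\<^sub>R v) has_derivative (\<lambda>h. h *\<^sub>R v)) (at s within S)"
    by (auto intro!: derivative_eq_intros)
  from has_derivative_compose[OF this assms]
  have "((\<lambda>\<tau>. F (w + \<tau> *\<^sub>R v)) has_derivative (\<lambda>h. F' (h *\<^sub>R v))) (at s within S)" .
  moreover have "(\<lambda>h. F' (h *\<^sub>R v)) = (\<lambda>h. h *\<^sub>R F' v)"
    using assms by (auto simp: has_derivative_def intro!: ext linear_cmul bounded_linear.linear)
  ultimately show ?thesis
    by (simp add: has_vector_derivative_def)
qed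

lemma pd_eqI:
  assumes "((\<lambda>s. F (y + s *\<^sub>R v)) has_vector_derivative D) (at 0)"
  shows "pd v F y = D"
  unfolding pd_def using assms by (rule vector_derivative_at)

lemma pd_eq_frechet_derivative:
  fixes F :: "'a::euclidean_space \<Rightarrow> 'b::real_normed_vector"
  assumes "F differentiable (at y)"
  shows "pd v F y = frechet_derivative F (at y) v"
  using assms has_vector_derivative_along_line[of F _ y 0 v UNIV]
  by (intro pd_eqI) (simp add: frechet_derivative_works)

lemma has_vector_derivative_pd_along_line:
  fixes F :: "'a::euclidean_space \<Rightarrow> 'b::real_normed_vector"
  assumes "F differentiable (at (y + s *\<^sub>R v))"
  shows "((\<lambda>s. F (y + s *\<^sub>R v)) has_vector_derivative pd v F (y + s *\<^sub>R v)) (at s within S)"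
  using assms has_vector_derivative_along_line[of F _ y s v S]
  by (simp add: frechet_derivative_works pd_eq_frechet_derivative)

lemma has_vector_derivative_pd:
  fixes F :: "'a::euclidean_space \<Rightarrow> 'b::real_normed_vector"
  assumes "F differentiable (at y)"
  shows "((\<lambda>s. F (y + s *\<^sub>R v)) has_vector_derivative pd v F y) (at 0)"
  using has_vector_derivative_pd_along_line[of F y 0 v UNIV] assms by simp

lemma pd_const [simp]: "pd v (\<lambda>_. c) = (\<lambda>_. 0)"
  by (rule ext, rule pd_eqI) (auto intro: derivative_eq_intros)

lemma pd_zero_direction [simp]: "pd 0 F = (\<lambda>_. 0)"
  by (rule ext) (simp add: pd_def)

lemma pd_lincomb:
  fixes F G :: "'a::euclidean_space \<Rightarrow> complex"
  assumes "F differentiable (at y)" "G differentiable (at y)"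
  shows "pd v (\<lambda>y. a * F y + b * G y) y = a * pd v F y + b * pd v G y"
  by (rule pd_eqI)
    (use has_vector_derivative_add[OF has_vector_derivative_mult_right[OF has_vector_derivative_pd[OF assms(1)]]
        has_vector_derivative_mult_right[OF has_vector_derivative_pd[OF assms(2)]]] in simp)

lemma pd_cmult:
  fixes F :: "'a::euclidean_space \<Rightarrow> complex"
  assumes "F differentiable (at y)"
  shows "pd v (\<lambda>y. a * F y) y = a * pd v F y"
  using pd_lincomb[OF assms differentiable_const, of v a 0] by simp

lemma pd_mult:
  fixes F G :: "'a::euclidean_space \<Rightarrow> complex"
  assumes "F differentiable (at y)" "G differentiable (at y)"
  shows "pd v (\<lambda>y. F y * G y) y = pd v F y * G y + F y * pd v G y"
  by (rule pd_eqI)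
    (use has_vector_derivative_mult[OF has_vector_derivative_pd[OF assms(1)] has_vector_derivative_pd[OF assms(2)]]
     in \<open>simp add: algebra_simps\<close>)

lemma pd_sum:
  fixes f :: "'i \<Rightarrow> 'a::euclidean_space \<Rightarrow> complex"
  assumes "\<And>i. i \<in> A \<Longrightarrow> f i differentiable (at y)"
  shows "pd v (\<lambda>y. \<Sum>i\<in>A. f i y) y = (\<Sum>i\<in>A. pd v (f i) y)"
proof (cases "finite A")
  case True
  show ?thesis
    by (rule pd_eqI, rule has_vector_derivative_sum) (use assms in \<open>auto intro: has_vector_derivative_pd\<close>)
qed simp

lemma pd_of_real:
  fixes g :: "'a::euclidean_space \<Rightarrow> real"
  assumes "g differentiable (at y)"
  shows "pd v (\<lambda>y. complex_of_real (g y)) y = complex_of_real (pd v g y)"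
proof (rule pd_eqI)
  have "((\<lambda>s. g (y + s *\<^sub>R v)) has_real_derivative pd v g y) (at 0)"
    using has_vector_derivative_pd[OF assms] by (simp add: has_real_derivative_iff_has_vector_derivative)
  then show "((\<lambda>s. complex_of_real (g (y + s *\<^sub>R v))) has_vector_derivative complex_of_real (pd v g y)) (at 0)"
    by (rule has_vector_derivative_of_real)
qed

lemma pd_integral_along_line:
  fixes F :: "'a::euclidean_space \<Rightarrow> complex"
  assumes "\<And>y. F differentiable (at y)" and "0 \<le> t"
  shows "F (y + t *\<^sub>R v) - F y = integral {0..t} (\<lambda>\<tau>. pd v F (y + \<tau> *\<^sub>R v))"
proof -
  have "((\<lambda>\<tau>. pd v F (y + \<tau> *\<^sub>R v)) has_integral (F (y + t *\<^sub>R v) - F (y + 0 *\<^sub>R v))) {0..t}"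
    by (rule fundamental_theorem_of_calculus[OF \<open>0 \<le> t\<close>]) (intro has_vector_derivative_pd_along_line assms)
  then show ?thesis
    by (simp add: integral_unique)
qed

lemma differentiable_sum_list:
  fixes f :: "'k \<Rightarrow> 'a::euclidean_space \<Rightarrow> complex"
  assumes "\<And>k. k \<in> set xs \<Longrightarrow> f k differentiable (at y)"
  shows "(\<lambda>y. \<Sum>k\<leftarrow>xs. f k y) differentiable (at y)"
  using assms by (induction xs) (auto intro!: differentiable_add)

lemma pd_sum_list:
  fixes f :: "'k \<Rightarrow> 'a::euclidean_space \<Rightarrow> complex"
  assumes "\<And>k. k \<in> set xs \<Longrightarrow> f k differentiable (at y)"
  shows "pd v (\<lambda>y. \<Sum>k\<leftarrow>xs. f k y) y = (\<Sum>k\<leftarrow>xs. pd v (f k) y)"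
  using assms
proof (induction xs)
  case (Cons k xs)
  have "pd v (\<lambda>y. 1 * f k y + 1 * (\<Sum>k\<leftarrow>xs. f k y)) y = 1 * pd v (f k) y + 1 * pd v (\<lambda>y. \<Sum>k\<leftarrow>xs. f k y) y"
    by (rule pd_lincomb) (use Cons.prems in \<open>auto intro!: differentiable_sum_list\<close>)
  then show ?case
    using Cons by simp
qed simp

text \<open>
  Obtained by differentiating \<open>F(x + s u + t v) - F(x + s u) = \<integral>\<^sub>0\<^sup>t \<partial>\<^sub>v F(x + s u + \<tau> v) d\<tau>\<close>
  in \<open>s\<close> at \<open>0\<close>, under the integral sign.
\<close>

lemma pd_increment_integral:
  fixes F :: "'a::euclidean_space \<Rightarrow> complex"
  assumes dF: "\<And>y. F differentiable (at y)" and dV: "\<And>y. pd v F differentiable (at y)"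
    and cont: "continuous_on UNIV (pd u (pd v F))" and t: "0 \<le> t"
  shows "pd u F (x + t *\<^sub>R v) - pd u F x = integral {0..t} (\<lambda>\<tau>. pd u (pd v F) (x + \<tau> *\<^sub>R v))"
proof -
  define G where "G = pd v F"
  have contG: "continuous_on UNIV G"
    using dV unfolding G_def by (meson continuous_at_imp_continuous_on differentiable_imp_continuous_within)
  have contD: "continuous_on UNIV (pd u G)"
    using cont unfolding G_def .
  define W where "W s = F (x + s *\<^sub>R u + t *\<^sub>R v) - F (x + s *\<^sub>R u)" for s
  have "((\<lambda>s. F ((x + t *\<^sub>R v) + s *\<^sub>R u)) has_vector_derivative pd u F (x + t *\<^sub>R v)) (at 0)"
    "((\<lambda>s. F (x + s *\<^sub>R u)) has_vector_derivative pd u F x) (at 0)"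
    by (intro has_vector_derivative_pd dF)+
  then have "(W has_vector_derivative pd u F (x + t *\<^sub>R v) - pd u F x) (at 0)"
    unfolding W_def using has_vector_derivative_diff by (auto simp: algebra_simps)
  moreover have "W = (\<lambda>s. integral (cbox 0 t) (\<lambda>\<tau>. G (x + s *\<^sub>R u + \<tau> *\<^sub>R v)))"
  proof
    fix s
    have "W s = F ((x + s *\<^sub>R u) + t *\<^sub>R v) - F (x + s *\<^sub>R u)"
      by (simp add: W_def)
    also have "\<dots> = integral {0..t} (\<lambda>\<tau>. G (x + s *\<^sub>R u + \<tau> *\<^sub>R v))"
      unfolding G_def by (rule pd_integral_along_line[OF dF t])
    finally show "W s = integral (cbox 0 t) (\<lambda>\<tau>. G (x + s *\<^sub>R u + \<tau> *\<^sub>R v))"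
      by simp
  qed
  moreover have "((\<lambda>s. integral (cbox 0 t) (\<lambda>\<tau>. G (x + s *\<^sub>R u + \<tau> *\<^sub>R v))) has_vector_derivative
      integral (cbox 0 t) (\<lambda>\<tau>. pd u G (x + 0 *\<^sub>R u + \<tau> *\<^sub>R v))) (at 0 within UNIV)"
  proof (rule leibniz_rule_vector_derivative)
    fix s \<tau> :: real
    have "((\<lambda>s. G ((x + \<tau> *\<^sub>R v) + s *\<^sub>R u)) has_vector_derivative pd u G ((x + \<tau> *\<^sub>R v) + s *\<^sub>R u)) (at s within UNIV)"
      by (rule has_vector_derivative_pd_along_line) (use dV in \<open>simp add: G_def\<close>)
    then show "((\<lambda>s. G (x + s *\<^sub>R u + \<tau> *\<^sub>R v)) has_vector_derivative pd u G (x + s *\<^sub>R u + \<tau> *\<^sub>R v)) (at s within UNIV)"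
      by (simp add: algebra_simps)
  next
    fix s :: real
    have "continuous_on UNIV (\<lambda>\<tau>::real. x + s *\<^sub>R u + \<tau> *\<^sub>R v)"
      by (intro continuous_intros)
    from continuous_on_compose2[OF contG this subset_UNIV]
    show "(\<lambda>\<tau>. G (x + s *\<^sub>R u + \<tau> *\<^sub>R v)) integrable_on cbox 0 t"
      by (rule integrable_continuous[OF continuous_on_subset[OF _ subset_UNIV]])
  next
    have "continuous_on UNIV (\<lambda>p::real \<times> real. x + fst p *\<^sub>R u + snd p *\<^sub>R v)"
      by (intro continuous_intros)
    from continuous_on_compose2[OF contD this subset_UNIV]
    show "continuous_on (UNIV \<times> cbox 0 t) (\<lambda>(s, \<tau>). pd u G (x + s *\<^sub>R u + \<tau> *\<^sub>R v))"
      unfolding case_prod_beta' by (rule continuous_on_subset) (rule subset_UNIV)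
  qed auto
  ultimately have "(W has_vector_derivative integral {0..t} (\<lambda>\<tau>. pd u G (x + \<tau> *\<^sub>R v))) (at 0)"
    by simp
  with \<open>(W has_vector_derivative pd u F (x + t *\<^sub>R v) - pd u F x) (at 0)\<close> show ?thesis
    unfolding G_def by (rule vector_derivative_unique_at)
qed

lemma pd_commute_continuous:
  fixes F :: "'a::euclidean_space \<Rightarrow> complex"
  assumes dF: "\<And>y. F differentiable (at y)"
    and dU: "\<And>y. pd u F differentiable (at y)" and dV: "\<And>y. pd v F differentiable (at y)"
    and cont: "continuous_on UNIV (pd u (pd v F))"
  shows "pd v (pd u F) x = pd u (pd v F) x"
proof -
  define \<Phi> where "\<Phi> t = pd u F (x + t *\<^sub>R v) - pd u F x" for t
  define \<Psi> where "\<Psi> t = integral {0..t} (\<lambda>\<tau>. pd u (pd v F) (x + \<tau> *\<^sub>R v))" for t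
  have "((\<lambda>t. pd u F (x + t *\<^sub>R v)) has_vector_derivative pd v (pd u F) x) (at 0 within cbox 0 1)"
    using has_vector_derivative_pd_along_line[of "pd u F" x 0 v] dU by simp
  then have \<Phi>_deriv: "(\<Phi> has_vector_derivative pd v (pd u F) x) (at 0 within cbox 0 1)"
    unfolding \<Phi>_def
    by (rule has_vector_derivative_diff[OF _ has_vector_derivative_const, THEN has_vector_derivative_eq_rhs]) simp
  have \<Psi>_deriv: "(\<Psi> has_vector_derivative pd u (pd v F) x) (at 0 within cbox 0 1)"
  proof -
    have "continuous_on UNIV (\<lambda>\<tau>::real. x + \<tau> *\<^sub>R v)"
      by (intro continuous_intros)
    from continuous_on_compose2[OF cont this subset_UNIV]
    have "continuous_on {0..1} (\<lambda>\<tau>. pd u (pd v F) (x + \<tau> *\<^sub>R v))"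
      by (rule continuous_on_subset) (rule subset_UNIV)
    from integral_has_vector_derivative[OF this, of 0] show ?thesis
      unfolding \<Psi>_def by simp
  qed
  have "\<Phi> t = \<Psi> t" if "t \<in> cbox 0 1" for t
    using that unfolding \<Phi>_def \<Psi>_def by (simp add: pd_increment_integral[OF dF dV cont])
  then have "(\<Phi> has_vector_derivative pd u (pd v F) x) (at 0 within cbox 0 1)"
    by (intro has_vector_derivative_transform_within[OF \<Psi>_deriv, of 1]) auto
  with \<Phi>_deriv show ?thesis
    by (intro vector_derivative_unique_within_closed_interval[of 0 1 0]) auto
qed

lemma smooth_imp_differentiable: "smooth F \<Longrightarrow> F differentiable (at y)"
  unfolding smooth_def by (metis empty_subsetI list.set(1) pds_Nil)

lemma smooth_pds: "smooth F \<Longrightarrow> set ws \<subseteq> Basis \<Longrightarrow> smooth (pds ws F)"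
  unfolding smooth_def by (metis pds_append set_append Un_subset_iff)

lemma smooth_pd: "smooth F \<Longrightarrow> v \<in> Basis \<Longrightarrow> smooth (pd v F)"
  using smooth_pds[of F "[v]"] by simp

lemma differentiable_pds: "smooth F \<Longrightarrow> set ws \<subseteq> Basis \<Longrightarrow> pds ws F differentiable (at y)"
  unfolding smooth_def by blast

lemma pds_lincomb:
  fixes F G :: "'a::euclidean_space \<Rightarrow> complex"
  assumes "smooth F" "smooth G" "set vs \<subseteq> Basis"
  shows "pds vs (\<lambda>y. a * F y + b * G y) = (\<lambda>y. a * pds vs F y + b * pds vs G y)"
  using assms(3) by (induction vs) (auto intro!: ext pd_lincomb differentiable_pds assms(1,2))

lemma smooth_lincomb:
  fixes F G :: "'a::euclidean_space \<Rightarrow> complex"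
  assumes "smooth F" "smooth G"
  shows "smooth (\<lambda>y. a * F y + b * G y)"
  unfolding smooth_def
  by (auto simp: pds_lincomb[OF assms] intro!: differentiable_add differentiable_mult differentiable_const
      differentiable_pds assms)

lemma pds_const: "pds vs (\<lambda>_. c) = (\<lambda>_. if vs = [] then c else 0)"
  by (induction vs) auto

lemma smooth_const: "smooth (\<lambda>_. c)"
  unfolding smooth_def by (simp add: pds_const)

lemma smooth_add:
  fixes F G :: "'a::euclidean_space \<Rightarrow> complex"
  assumes "smooth F" "smooth G"
  shows "smooth (\<lambda>y. F y + G y)"
  using smooth_lincomb[OF assms, of 1 1] by simp

lemma pds_cmult:
  fixes F :: "'a::euclidean_space \<Rightarrow> complex"
  assumes "smooth F" "set vs \<subseteq> Basis"
  shows "pds vs (\<lambda>y. a * F y) = (\<lambda>y. a * pds vs F y)"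
  using pds_lincomb[OF assms(1) smooth_const assms(2), of a 0] by simp

lemma smooth_sum:
  fixes f :: "'i \<Rightarrow> 'a::euclidean_space \<Rightarrow> complex"
  assumes "\<And>i. i \<in> A \<Longrightarrow> smooth (f i)"
  shows "smooth (\<lambda>y. \<Sum>i\<in>A. f i y)"
proof (cases "finite A")
  case True
  then show ?thesis
    using assms by (induction A rule: finite_induct) (auto intro: smooth_const smooth_add)
qed (simp add: smooth_const)

fun splits :: "'x list \<Rightarrow> ('x list \<times> 'x list) list" where
  "splits [] = [([], [])]"
| "splits (v # ws) = map (\<lambda>(a, b). (v # a, b)) (splits ws) @ map (\<lambda>(a, b). (a, v # b)) (splits ws)"

lemma splits_subset: "(a, b) \<in> set (splits ix) \<Longrightarrow> set a \<subseteq> set ix \<and> set b \<subseteq> set ix"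
  by (induction ix arbitrary: a b) (simp, fastforce)

lemma sorted_splits_snd: "(a, b) \<in> set (splits ix) \<Longrightarrow> sorted ix \<Longrightarrow> sorted b"
proof (induction ix arbitrary: a b)
  case (Cons v ws)
  from Cons.prems(1) obtain a' b' where ab: "(a', b') \<in> set (splits ws)" "b = b' \<or> b = v # b'"
    by auto
  have "sorted b'"
    using Cons.IH[OF ab(1)] Cons.prems(2) by simp
  moreover have "set b' \<subseteq> set ws"
    using splits_subset[OF ab(1)] by simp
  ultimately show ?case
    using ab(2) Cons.prems(2) by force
qed simp

lemma pds_mult_leibniz:
  fixes F G :: "'a::euclidean_space \<Rightarrow> complex"
  assumes F: "smooth F" and G: "smooth G" and B: "set (map g ix) \<subseteq> Basis"
  shows "pds (map g ix) (\<lambda>y. F y * G y)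
       = (\<lambda>y. \<Sum>p\<leftarrow>splits ix. pds (map g (fst p)) F y * pds (map g (snd p)) G y)"
  using B
proof (induction ix)
  case (Cons i ix)
  then have B': "set (map g ix) \<subseteq> Basis" by auto
  have sub: "set (map g (fst p)) \<subseteq> Basis" "set (map g (snd p)) \<subseteq> Basis" if "p \<in> set (splits ix)" for p
    using splits_subset[of "fst p" "snd p" ix] that B' by auto
  show ?case
  proof
    fix y
    have "pds (map g (i # ix)) (\<lambda>y. F y * G y) y
        = pd (g i) (\<lambda>y. \<Sum>p\<leftarrow>splits ix. pds (map g (fst p)) F y * pds (map g (snd p)) G y) y"
      using Cons.IH[OF B'] by simp
    also have "\<dots> = (\<Sum>p\<leftarrow>splits ix. pd (g i) (\<lambda>y. pds (map g (fst p)) F y * pds (map g (snd p)) G y) y)"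
      by (rule pd_sum_list) (auto intro!: differentiable_mult differentiable_pds F G dest: sub)
    also have "\<dots> = (\<Sum>p\<leftarrow>splits ix. pds (map g (i # fst p)) F y * pds (map g (snd p)) G y
                                     + pds (map g (fst p)) F y * pds (map g (i # snd p)) G y)"
      by (intro arg_cong[where f=sum_list] map_cong refl) (auto intro!: pd_mult differentiable_pds F G dest: sub)
    also have "\<dots> = (\<Sum>p\<leftarrow>splits (i # ix). pds (map g (fst p)) F y * pds (map g (snd p)) G y)"
      by (simp add: sum_list_addf o_def case_prod_beta)
    finally show "pds (map g (i # ix)) (\<lambda>y. F y * G y) y
        = (\<Sum>p\<leftarrow>splits (i # ix). pds (map g (fst p)) F y * pds (map g (snd p)) G y)" .
  qed
qed simp

lemma smooth_mult:
  fixes F G :: "'a::euclidean_space \<Rightarrow> complex"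
  assumes F: "smooth F" and G: "smooth G"
  shows "smooth (\<lambda>y. F y * G y)"
  unfolding smooth_def
proof (intro allI impI)
  fix vs :: "'a list" and y
  assume vs: "set vs \<subseteq> Basis"
  have sub: "set (fst p) \<subseteq> Basis" "set (snd p) \<subseteq> Basis" if "p \<in> set (splits vs)" for p
    using splits_subset[of "fst p" "snd p" vs] that vs by auto
  show "pds vs (\<lambda>y. F y * G y) differentiable at y"
    using pds_mult_leibniz[OF F G, of id vs] vs
    by (simp, intro differentiable_sum_list) (auto intro!: differentiable_mult differentiable_pds F G dest: sub)
qed

lemma smooth_prod:
  fixes f :: "'i \<Rightarrow> 'a::euclidean_space \<Rightarrow> complex"
  assumes "\<And>i. i \<in> A \<Longrightarrow> smooth (f i)"
  shows "smooth (\<lambda>y. \<Prod>i\<in>A. f i y)"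
proof (cases "finite A")
  case True
  then show ?thesis
    using assms by (induction A rule: finite_induct) (auto intro: smooth_const smooth_mult)
qed (simp add: smooth_const)

lemma smooth_power:
  fixes f :: "'a::euclidean_space \<Rightarrow> complex"
  assumes "smooth f"
  shows "smooth (\<lambda>z. f z ^ n)"
  by (induction n) (auto intro: smooth_const smooth_mult assms)

lemma pd_commute:
  fixes F :: "'a::euclidean_space \<Rightarrow> complex"
  assumes F: "smooth F" and u: "u \<in> Basis" and v: "v \<in> Basis"
  shows "pd v (pd u F) = pd u (pd v F)"
proof
  fix x
  have "pd u (pd v F) differentiable (at y)" for y
    using differentiable_pds[OF F, of "[u, v]"] u v by simp
  then have "continuous_on UNIV (pd u (pd v F))"
    by (auto intro!: continuous_at_imp_continuous_on differentiable_imp_continuous_within)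
  then show "pd v (pd u F) x = pd u (pd v F) x"
    using differentiable_pds[OF F, of "[u]"] differentiable_pds[OF F, of "[v]"] u v
    by (intro pd_commute_continuous smooth_imp_differentiable[OF F]) auto
qed

lemma pd_pds_commute:
  fixes F :: "'a::euclidean_space \<Rightarrow> complex"
  assumes F: "smooth F" and u: "u \<in> Basis" and ws: "set ws \<subseteq> Basis"
  shows "pd u (pds ws F) = pds ws (pd u F)"
  using ws
proof (induction ws)
  case (Cons w ws)
  then have "set ws \<subseteq> Basis" "w \<in> Basis"
    by auto
  then show ?case
    using Cons.IH pd_commute[OF smooth_pds[OF F] _ u] by simp
qed simp

lemma pds_zero_direction:
  assumes "0 \<in> set ws"
  shows "pds ws F = (\<lambda>_. 0)"
proof -
  obtain w1 w2 where ws: "ws = w1 @ 0 # w2"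
    using assms split_list by metis
  have "pds w1 (\<lambda>_. 0::'b::real_normed_vector) = (\<lambda>_. 0)" for w1 :: "'a list"
    by (induction w1) auto
  then show ?thesis
    unfolding ws pds_append by simp
qed

lemma differentiable_pds_insert_zero:
  assumes "smooth G" "set ws \<subseteq> insert 0 Basis"
  shows "pds ws G differentiable (at y)"
proof (cases "0 \<in> set ws")
  case False
  then show ?thesis
    using assms differentiable_pds by blast
qed (simp add: pds_zero_direction)

lemma pd_comp_fst: "pd v (\<lambda>y. P (fst y)) y = pd (fst v) P (fst y)"
  by (simp add: pd_def)

lemma pd_comp_snd: "pd v (\<lambda>y. P (snd y)) y = pd (snd v) P (snd y)"
  by (simp add: pd_def)

lemma pds_comp_fst: "pds vs (\<lambda>y. P (fst y)) = (\<lambda>y. pds (map fst vs) P (fst y))"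
  by (induction vs) (auto intro!: ext simp: pd_comp_fst)

lemma pds_comp_snd: "pds vs (\<lambda>y. P (snd y)) = (\<lambda>y. pds (map snd vs) P (snd y))"
  by (induction vs) (auto intro!: ext simp: pd_comp_snd)

lemma differentiable_comp_fst:
  "P differentiable (at (fst y)) \<Longrightarrow> (\<lambda>y. P (fst y)) differentiable (at y)"
  using differentiable_chain_at[OF bounded_linear_imp_differentiable[OF bounded_linear_fst]]
  by (simp add: o_def)

lemma differentiable_comp_snd:
  "P differentiable (at (snd y)) \<Longrightarrow> (\<lambda>y. P (snd y)) differentiable (at y)"
  using differentiable_chain_at[OF bounded_linear_imp_differentiable[OF bounded_linear_snd]]
  by (simp add: o_def)

lemma pair_zero_in_Basis: "v \<in> Basis \<Longrightarrow> (v, 0::'b::euclidean_space) \<in> (Basis :: ('a::euclidean_space \<times> 'b) set)"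
  by (auto simp: Basis_prod_def)

lemma zero_pair_in_Basis: "v \<in> Basis \<Longrightarrow> (0::'a::euclidean_space, v) \<in> (Basis :: ('a \<times> 'b::euclidean_space) set)"
  by (auto simp: Basis_prod_def)

lemma smooth_comp_fst:
  fixes G :: "'a::euclidean_space \<Rightarrow> 'c::real_normed_vector"
  assumes "smooth G"
  shows "smooth (\<lambda>y::'a \<times> 'b::euclidean_space. G (fst y))"
  unfolding smooth_def pds_comp_fst
proof (intro allI impI)
  fix vs :: "('a \<times> 'b) list" and y
  assume "set vs \<subseteq> Basis"
  then have "set (map fst vs) \<subseteq> insert 0 Basis"
    by (auto simp: Basis_prod_def)
  then show "(\<lambda>y. pds (map fst vs) G (fst y)) differentiable at y"
    by (intro differentiable_comp_fst differentiable_pds_insert_zero assms)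
qed

lemma smooth_comp_snd:
  fixes G :: "'b::euclidean_space \<Rightarrow> 'c::real_normed_vector"
  assumes "smooth G"
  shows "smooth (\<lambda>y::'a::euclidean_space \<times> 'b. G (snd y))"
  unfolding smooth_def pds_comp_snd
proof (intro allI impI)
  fix vs :: "('a \<times> 'b) list" and y
  assume "set vs \<subseteq> Basis"
  then have "set (map snd vs) \<subseteq> insert 0 Basis"
    by (auto simp: Basis_prod_def)
  then show "(\<lambda>y. pds (map snd vs) G (snd y)) differentiable at y"
    by (intro differentiable_comp_snd differentiable_pds_insert_zero assms)
qed

lemma pd_snd_direction: "pd (0, w) F (t, x) = pd w (\<lambda>z. F (t, z)) x"
  by (simp add: pd_def)

lemma pds_snd_directions: "pds (map (\<lambda>v. (0, v)) vs) F (t, x) = pds vs (\<lambda>z. F (t, z)) x"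
proof (induction vs arbitrary: x)
  case (Cons v vs)
  then have "(\<lambda>z. pds (map (\<lambda>v. (0, v)) vs) F (t, z)) = pds vs (\<lambda>z. F (t, z))"
    by auto
  then show ?case
    by (simp add: pd_snd_direction)
qed simp

lemma smooth_slice:
  fixes F :: "'a::euclidean_space \<times> 'b::euclidean_space \<Rightarrow> 'c::real_normed_vector"
  assumes "smooth F"
  shows "smooth (\<lambda>z. F (t, z))"
  unfolding smooth_def
proof (intro allI impI)
  fix vs :: "'b list" and z
  assume vs: "set vs \<subseteq> Basis"
  have B: "set (map (\<lambda>v. (0::'a, v)) vs) \<subseteq> Basis"
    using vs zero_pair_in_Basis by auto
  have "(\<lambda>z::'b. (t, z)) differentiable (at z)"
    by (rule differentiableI, rule derivative_eq_intros) (auto intro: derivative_eq_intros)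
  from differentiable_chain_at[OF this differentiable_pds[OF assms B]]
  have "(\<lambda>z. pds (map (\<lambda>v. (0::'a, v)) vs) F (t, z)) differentiable (at z)"
    by (simp add: o_def)
  then show "pds vs (\<lambda>z. F (t, z)) differentiable at z"
    by (simp add: pds_snd_directions)
qed

lemma differentiable_of_real:
  fixes g :: "'a::euclidean_space \<Rightarrow> real"
  shows "g differentiable (at y) \<Longrightarrow> (\<lambda>y. complex_of_real (g y)) differentiable (at y)"
  using differentiable_chain_at[OF _ bounded_linear_imp_differentiable[OF bounded_linear_of_real]]
  by (simp add: o_def)

lemma pds_of_real:
  fixes g :: "'a::euclidean_space \<Rightarrow> real"
  assumes "smooth g" "set vs \<subseteq> Basis"
  shows "pds vs (\<lambda>y. complex_of_real (g y)) = (\<lambda>y. complex_of_real (pds vs g y))"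
  using assms(2) by (induction vs) (auto intro!: ext pd_of_real differentiable_pds assms(1))

lemma smooth_of_real:
  fixes g :: "'a::euclidean_space \<Rightarrow> real"
  assumes "smooth g"
  shows "smooth (\<lambda>y. complex_of_real (g y))"
  unfolding smooth_def
  by (auto simp: pds_of_real[OF assms] intro!: differentiable_of_real differentiable_pds assms)

lemma smooth_bounded_linear:
  fixes L :: "'a::euclidean_space \<Rightarrow> complex"
  assumes "bounded_linear L"
  shows "smooth L"
proof -
  have "pd v L = (\<lambda>_. L v)" for v
    by (rule ext, rule pd_eqI)
      (use bounded_linear_imp_has_derivative[OF assms] has_vector_derivative_along_line[of L L]
       in \<open>auto simp: linear_add[OF bounded_linear.linear[OF assms]]\<close>)
  then have "pds vs L differentiable (at y)" for vs y
    using bounded_linear_imp_differentiable[OF assms]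
    by (cases vs rule: rev_cases) (auto simp: pds_append pds_const)
  then show ?thesis
    unfolding smooth_def by blast
qed

lemma smooth_mpow: "smooth (\<lambda>z::(real, 'n::finite) vec. complex_of_real (mpow z \<beta>))"
proof -
  have "bounded_linear (\<lambda>z::(real, 'n) vec. complex_of_real (z $ i))" for i
    using bounded_linear_compose[OF bounded_linear_of_real bounded_linear_vec_nth[of i]] by (simp add: o_def)
  then have "smooth (\<lambda>z::(real, 'n) vec. \<Prod>i\<in>UNIV. complex_of_real (z $ i) ^ \<beta> i)"
    by (intro smooth_prod smooth_power) (rule smooth_bounded_linear)
  then show ?thesis
    by (simp add: mpow_def)
qed

lemma smooth_mpow_snd:
  "smooth (\<lambda>y::(real, 'm::finite) vec \<times> (real, 'n::finite) vec. complex_of_real (mpow (snd y) \<beta>))"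
  by (rule smooth_comp_snd[OF smooth_mpow])

lemma idx_list_zero [simp]: "idx_list (\<lambda>_. 0) = []"
  by (simp add: idx_list_def)

lemma sorted_idx_list: "sorted (idx_list \<beta>)"
proof -
  have "sorted (concat (map (\<lambda>i. replicate (\<beta> i) i) L))" if "sorted L" for L :: "'a list"
    using that by (induction L) (auto simp: sorted_append)
  then show ?thesis
    unfolding idx_list_def by simp
qed

lemma count_list_idx_list: "count_list (idx_list (\<beta>::'k::{finite,linorder} \<Rightarrow> nat)) j = \<beta> j"
proof -
  have rep: "count_list (replicate n i) j = (if i = j then n else 0)" for n i
    by (induction n) auto
  have "count_list (concat (map (\<lambda>i. replicate (\<beta> i) i) L)) j = (if j \<in> set L then \<beta> j else 0)"
    if "distinct L" for L
    using that by (induction L) (auto simp: count_list_append rep)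
  then show ?thesis
    unfolding idx_list_def by simp
qed

lemma length_idx_list: "length (idx_list \<beta>) = mabs \<beta>"
proof -
  have "length (idx_list \<beta>) = sum_list (map \<beta> (sorted_list_of_set UNIV))"
    unfolding idx_list_def by (simp add: length_concat o_def)
  then show ?thesis
    by (simp add: mabs_def sum_list_distinct_conv_sum_set)
qed

lemma idx_list_count_list:
  assumes "sorted xs"
  shows "idx_list (count_list xs) = (xs :: 'k::{finite,linorder} list)"
proof -
  have "mset (idx_list (count_list xs)) = mset xs"
    by (simp add: multiset_eq_iff count_mset count_list_idx_list)
  then have "sort xs = idx_list (count_list xs)"
    by (intro properties_for_sort sorted_idx_list)
  then show ?thesis
    using sorted_sort_id[OF assms] by simp
qed

lemma mabs_zero [simp]: "mabs (\<lambda>_. 0) = 0"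
  by (simp add: mabs_def)

lemma mfact_zero [simp]: "mfact (\<lambda>_. 0) = 1"
  by (simp add: mfact_def)

lemma mpow_zero [simp]: "mpow x (\<lambda>_. 0) = 1"
  by (simp add: mpow_def)

lemma mfact_ge_1: "1 \<le> mfact \<alpha>"
  unfolding mfact_def by (rule prod_ge_1) (simp add: fact_ge_1)

lemma S_bound_nonneg:
  fixes \<phi> :: "('m::{finite,linorder}, 'n::{finite,linorder}) fn"
  assumes "S_bound \<sigma> \<mu> C \<phi> B"
  shows "0 \<le> B"
proof -
  have "\<bar>mpow 0 (\<lambda>_::'n. 0)\<bar> * norm (pds (dirs_x (\<lambda>_. 0) @ dirs_t (\<lambda>_. 0)) \<phi> (0, 0))
     \<le> B * C ^ (mabs (\<lambda>_::'n. 0) + mabs (\<lambda>_::'n. 0) + mabs (\<lambda>_::'m. 0))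
        * mfact (\<lambda>_::'m. 0) powr \<sigma> * (mfact (\<lambda>_::'n. 0) * mfact (\<lambda>_::'n. 0)) powr \<mu>"
    using assms unfolding S_bound_def by blast
  then show ?thesis
    by (simp add: dirs_x_def dirs_t_def) (meson norm_ge_zero order_trans)
qed

lemma S_bound_pd_t:
  fixes \<phi> :: "('m::{finite,linorder}, 'n::{finite,linorder}) fn"
  assumes "S_bound \<sigma> \<mu> C \<phi> B"
  shows "norm (pd (axis r 1, 0) \<phi> y) \<le> B * C"
proof -
  obtain t x where y: "y = (t, x)"
    by (cases y)
  have idx: "idx_list (count_list [r]) = [r]"
    by (rule idx_list_count_list) simp
  have "mfact (count_list [r]) = 1"
    unfolding mfact_def by (intro prod.neutral) simp
  moreover have "mabs (count_list [r]) = 1"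
    using length_idx_list[of "count_list [r]"] by (simp add: idx)
  moreover have "\<bar>mpow x (\<lambda>_. 0)\<bar> * norm (pds (dirs_x (\<lambda>_. 0) @ dirs_t (count_list [r])) \<phi> (t, x))
     \<le> B * C ^ (mabs (\<lambda>_::'n. 0) + mabs (\<lambda>_::'n. 0) + mabs (count_list [r]))
        * mfact (count_list [r]) powr \<sigma> * (mfact (\<lambda>_::'n. 0) * mfact (\<lambda>_::'n. 0)) powr \<mu>"
    using assms unfolding S_bound_def by blast
  ultimately show ?thesis
    by (simp add: y dirs_x_def dirs_t_def idx)
qed

lemma S_bound_pds_x:
  fixes \<phi> :: "('m::{finite,linorder}, 'n::{finite,linorder}) fn"
  assumes "S_bound \<sigma> \<mu> C \<phi> B" and "sorted b"
  shows "norm (pds (map (\<lambda>i. (0::(real, 'm) vec, axis i 1)) b) \<phi> y)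
     \<le> B * (C ^ length b * mfact (count_list b) powr \<mu>)"
proof -
  obtain t x where y: "y = (t, x)"
    by (cases y)
  have idx: "idx_list (count_list b) = b"
    by (rule idx_list_count_list[OF \<open>sorted b\<close>])
  have "\<bar>mpow x (\<lambda>_. 0)\<bar> * norm (pds (dirs_x (count_list b) @ dirs_t (\<lambda>_. 0)) \<phi> (t, x))
     \<le> B * C ^ (mabs (\<lambda>_::'n. 0) + mabs (count_list b) + mabs (\<lambda>_::'m. 0))
        * mfact (\<lambda>_::'m. 0) powr \<sigma> * (mfact (\<lambda>_::'n. 0) * mfact (count_list b)) powr \<mu>"
    using assms unfolding S_bound_def by blast
  then show ?thesis
    using length_idx_list[of "count_list b"] by (simp add: y dirs_x_def dirs_t_def idx mult.assoc)
qed

lemma F_space_imp_smooth: "\<phi> \<in> F_space \<mu> \<Longrightarrow> smooth \<phi>"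
  by (auto simp: F_space_def S_space_def)

lemma zero_in_F_space: "(\<lambda>_. 0) \<in> F_space \<mu>"
proof -
  have "(\<lambda>_. 0) \<in> S_space 2 \<mu> 1"
    unfolding S_space_def S_bound_def t_periodic_def
    by (auto intro!: exI[of _ 0] smooth_const simp: pds_const)
  then show ?thesis
    unfolding F_space_def by force
qed

lemma set_dirs_x_subset_Basis:
  "set (dirs_x \<beta> :: ((real, 'm::{finite,linorder}) vec \<times> (real, 'n::{finite,linorder}) vec) list) \<subseteq> Basis"
  by (auto simp: dirs_x_def Basis_prod_def)

lemma Ptr_tx_eq:
  fixes \<phi> :: "('m::{finite,linorder}, 'n::{finite,linorder}) fn"
  shows "Ptr_tx c M \<phi> = (\<lambda>y. \<Sum>(\<alpha>, \<beta>)\<in>midx_le M. c \<alpha> \<beta> * (-1) ^ mabs \<alpha> *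
            pds (dirs_x \<alpha>) (\<lambda>y. complex_of_real (mpow (snd y) \<beta>) * \<phi> y) y)"
proof
  fix y :: "(real, 'm) vec \<times> (real, 'n) vec"
  obtain t x where y: "y = (t, x)"
    by (cases y)
  have "pds (dirs_x \<alpha>) F (t, x) = pds (map (\<lambda>i. axis i (1::real)) (idx_list \<alpha>)) (\<lambda>z. F (t, z)) x"
    for \<alpha> and F :: "('m, 'n) fn"
    using pds_snd_directions[of "map (\<lambda>i. axis i (1::real)) (idx_list \<alpha>)" F t x]
    by (simp add: dirs_x_def o_def)
  then show "Ptr_tx c M \<phi> y = (\<Sum>(\<alpha>, \<beta>)\<in>midx_le M. c \<alpha> \<beta> * (-1) ^ mabs \<alpha> *
            pds (dirs_x \<alpha>) (\<lambda>y. complex_of_real (mpow (snd y) \<beta>) * \<phi> y) y)"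
    by (simp add: y Ptr_tx_def Ptr_def Dk_def)
qed

lemma smooth_Ptr_tx:
  fixes \<phi> :: "('m::{finite,linorder}, 'n::{finite,linorder}) fn"
  assumes "smooth \<phi>"
  shows "smooth (Ptr_tx c M \<phi>)"
  unfolding Ptr_tx_eq
  by (auto intro!: smooth_sum smooth_mult smooth_const smooth_pds smooth_mpow_snd assms
      set_dirs_x_subset_Basis simp: case_prod_beta)

lemma Ptr_tx_lincomb:
  fixes F G :: "('m::{finite,linorder}, 'n::{finite,linorder}) fn"
  assumes F: "smooth F" and G: "smooth G"
  shows "Ptr_tx c M (\<lambda>y. a * F y + b * G y) = (\<lambda>y. a * Ptr_tx c M F y + b * Ptr_tx c M G y)"
proof
  fix y
  have "pds (dirs_x \<alpha>) (\<lambda>y. complex_of_real (mpow (snd y) \<beta>) * (a * F y + b * G y)) y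
      = a * pds (dirs_x \<alpha>) (\<lambda>y. complex_of_real (mpow (snd y) \<beta>) * F y) y
      + b * pds (dirs_x \<alpha>) (\<lambda>y. complex_of_real (mpow (snd y) \<beta>) * G y) y" for \<alpha> \<beta>
  proof -
    have "(\<lambda>y. complex_of_real (mpow (snd y) \<beta>) * (a * F y + b * G y))
        = (\<lambda>y. a * (complex_of_real (mpow (snd y) \<beta>) * F y) + b * (complex_of_real (mpow (snd y) \<beta>) * G y))"
      by (simp add: algebra_simps)
    then show ?thesis
      by (simp add: pds_lincomb[OF smooth_mult[OF smooth_mpow_snd F] smooth_mult[OF smooth_mpow_snd G]
            set_dirs_x_subset_Basis])
  qed
  then show "Ptr_tx c M (\<lambda>y. a * F y + b * G y) y = a * Ptr_tx c M F y + b * Ptr_tx c M G y"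
    unfolding Ptr_tx_eq by (simp add: sum_distrib_left sum.distrib case_prod_beta algebra_simps)
qed

lemma pd_Ptr_tx:
  fixes F :: "('m::{finite,linorder}, 'n::{finite,linorder}) fn"
  assumes F: "smooth F" and u: "u \<in> Basis" and u0: "snd u = 0"
  shows "pd u (Ptr_tx c M F) = Ptr_tx c M (pd u F)"
proof
  fix y
  have weight: "pd u (\<lambda>y. complex_of_real (mpow (snd y) \<beta>) * F y)
      = (\<lambda>y. complex_of_real (mpow (snd y) \<beta>) * pd u F y)" for \<beta>
    by (rule ext, subst pd_mult)
      (auto intro: smooth_imp_differentiable smooth_mpow_snd F
        simp: pd_comp_snd[of u "\<lambda>z. complex_of_real (mpow z \<beta>)"] u0)
  have "pd u (Ptr_tx c M F) y = (\<Sum>p\<in>midx_le M. pd u (\<lambda>y. c (fst p) (snd p) * (-1) ^ mabs (fst p) *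
            pds (dirs_x (fst p)) (\<lambda>y. complex_of_real (mpow (snd y) (snd p)) * F y) y) y)"
    unfolding Ptr_tx_eq case_prod_beta
    by (rule pd_sum) (auto intro!: differentiable_mult differentiable_const differentiable_pds
        smooth_mult smooth_mpow_snd F set_dirs_x_subset_Basis)
  also have "\<dots> = (\<Sum>p\<in>midx_le M. c (fst p) (snd p) * (-1) ^ mabs (fst p) *
            pd u (pds (dirs_x (fst p)) (\<lambda>y. complex_of_real (mpow (snd y) (snd p)) * F y)) y)"
    by (intro sum.cong refl pd_cmult differentiable_pds smooth_mult smooth_mpow_snd F set_dirs_x_subset_Basis)
  also have "\<dots> = Ptr_tx c M (pd u F) y"
    unfolding Ptr_tx_eq
    by (simp add: case_prod_beta pd_pds_commute[OF smooth_mult[OF smooth_mpow_snd F] u set_dirs_x_subset_Basis] weight)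
  finally show "pd u (Ptr_tx c M F) y = Ptr_tx c M (pd u F) y" .
qed

lemma Ptr_tx_mult_fst:
  fixes F :: "('m::{finite,linorder}, 'n::{finite,linorder}) fn"
  assumes F: "smooth F"
  shows "Ptr_tx c M (\<lambda>y. A (fst y) * F y) = (\<lambda>y. A (fst y) * Ptr_tx c M F y)"
proof
  fix y :: "(real, 'm) vec \<times> (real, 'n) vec"
  obtain t x where y: "y = (t, x)"
    by (cases y)
  have "set (map (\<lambda>i. axis i (1::real)) (idx_list \<alpha>)) \<subseteq> (Basis :: (real, 'n) vec set)" for \<alpha> :: "'n \<Rightarrow> nat"
    by auto
  from pds_cmult[OF smooth_mult[OF smooth_mpow smooth_slice[OF F]] this, where a="A t"]
  have "pds (map (\<lambda>i. axis i 1) (idx_list \<alpha>)) (\<lambda>z. complex_of_real (mpow z \<beta>) * (A t * F (t, z))) x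
      = A t * pds (map (\<lambda>i. axis i 1) (idx_list \<alpha>)) (\<lambda>z. complex_of_real (mpow z \<beta>) * F (t, z)) x" for \<alpha> \<beta>
    by (simp add: mult.left_commute)
  then show "Ptr_tx c M (\<lambda>y. A (fst y) * F y) y = A (fst y) * Ptr_tx c M F y"
    by (simp add: y Ptr_tx_def Ptr_def Dk_def sum_distrib_left case_prod_beta algebra_simps)
qed

lemma norm_sum_list_le: "norm (\<Sum>x\<leftarrow>xs. f x) \<le> (\<Sum>x\<leftarrow>xs. norm (f x :: 'a::real_normed_vector))"
  by (induction xs) (auto intro: order_trans[OF norm_triangle_ineq])

text \<open>
  Only \<open>\<phi>\<close> carries the seminorm: by the Leibniz rule, every derivative falling on the
  smooth weight \<open>A\<close> is evaluated at the fixed point \<open>y\<^sub>0\<close> and goes into the constant.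
\<close>

lemma Ptr_tx_mult_bound:
  fixes A :: "('m::{finite,linorder}, 'n::{finite,linorder}) fn"
  assumes A: "smooth A"
  obtains K where "\<And>\<phi> B. smooth \<phi> \<Longrightarrow> S_bound \<sigma> \<mu> C \<phi> B \<Longrightarrow>
    norm (Ptr_tx c M (\<lambda>y. A y * \<phi> y) y\<^sub>0) \<le> K * B"
proof
  define g where "g i = (0::(real, 'm) vec, axis i (1::real))" for i :: 'n
  define F where "F \<beta> y = complex_of_real (mpow (snd y) \<beta>) * A y" for \<beta> and y :: "(real, 'm) vec \<times> (real, 'n) vec"
  define w where "w b = C ^ length b * mfact (count_list b) powr \<mu>" for b :: "'n list"
  define K where "K = (\<Sum>(\<alpha>, \<beta>)\<in>midx_le M. norm (c \<alpha> \<beta>) *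
    (\<Sum>ab\<leftarrow>splits (idx_list \<alpha>). norm (pds (map g (fst ab)) (F \<beta>) y\<^sub>0) * w (snd ab)))"
  fix \<phi> :: "('m, 'n) fn" and B
  assume \<phi>: "smooth \<phi>" and SB: "S_bound \<sigma> \<mu> C \<phi> B"
  have gB: "set (map g ix) \<subseteq> Basis" for ix
    unfolding g_def by (auto intro: zero_pair_in_Basis)
  have term_bound: "norm (pds (dirs_x \<alpha>) (\<lambda>y. complex_of_real (mpow (snd y) \<beta>) * (A y * \<phi> y)) y\<^sub>0)
      \<le> B * (\<Sum>ab\<leftarrow>splits (idx_list \<alpha>). norm (pds (map g (fst ab)) (F \<beta>) y\<^sub>0) * w (snd ab))" for \<alpha> \<beta>
  proof -
    have "(\<lambda>y. complex_of_real (mpow (snd y) \<beta>) * (A y * \<phi> y)) = (\<lambda>y. F \<beta> y * \<phi> y)"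
      unfolding F_def by (simp add: mult.assoc)
    moreover have "dirs_x \<alpha> = map g (idx_list \<alpha>)"
      unfolding dirs_x_def g_def by simp
    moreover have "smooth (F \<beta>)"
      unfolding F_def by (intro smooth_mult smooth_mpow_snd A)
    ultimately have "norm (pds (dirs_x \<alpha>) (\<lambda>y. complex_of_real (mpow (snd y) \<beta>) * (A y * \<phi> y)) y\<^sub>0)
        = norm (\<Sum>ab\<leftarrow>splits (idx_list \<alpha>). pds (map g (fst ab)) (F \<beta>) y\<^sub>0 * pds (map g (snd ab)) \<phi> y\<^sub>0)"
      by (simp only: pds_mult_leibniz[OF _ \<phi> gB])
    also have "\<dots> \<le> (\<Sum>ab\<leftarrow>splits (idx_list \<alpha>). norm (pds (map g (fst ab)) (F \<beta>) y\<^sub>0 * pds (map g (snd ab)) \<phi> y\<^sub>0))"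
      by (rule norm_sum_list_le)
    also have "\<dots> \<le> (\<Sum>ab\<leftarrow>splits (idx_list \<alpha>). norm (pds (map g (fst ab)) (F \<beta>) y\<^sub>0) * (B * w (snd ab)))"
    proof (rule sum_list_mono)
      fix ab
      assume "ab \<in> set (splits (idx_list \<alpha>))"
      then have "sorted (snd ab)"
        using sorted_splits_snd[of "fst ab" "snd ab" "idx_list \<alpha>"] sorted_idx_list[of \<alpha>] by simp
      from S_bound_pds_x[OF SB this, of y\<^sub>0]
      show "norm (pds (map g (fst ab)) (F \<beta>) y\<^sub>0 * pds (map g (snd ab)) \<phi> y\<^sub>0)
          \<le> norm (pds (map g (fst ab)) (F \<beta>) y\<^sub>0) * (B * w (snd ab))"
        unfolding norm_mult g_def w_def by (rule mult_left_mono) simp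
    qed
    also have "\<dots> = B * (\<Sum>ab\<leftarrow>splits (idx_list \<alpha>). norm (pds (map g (fst ab)) (F \<beta>) y\<^sub>0) * w (snd ab))"
      by (subst sum_list_const_mult[symmetric]) (simp add: mult.left_commute)
    finally show ?thesis .
  qed
  have "norm (Ptr_tx c M (\<lambda>y. A y * \<phi> y) y\<^sub>0)
      \<le> (\<Sum>(\<alpha>, \<beta>)\<in>midx_le M. norm (c \<alpha> \<beta> * (-1) ^ mabs \<alpha> *
            pds (dirs_x \<alpha>) (\<lambda>y. complex_of_real (mpow (snd y) \<beta>) * (A y * \<phi> y)) y\<^sub>0))"
    unfolding Ptr_tx_eq case_prod_beta by (rule norm_sum)
  also have "\<dots> \<le> (\<Sum>(\<alpha>, \<beta>)\<in>midx_le M. norm (c \<alpha> \<beta>) *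
      (B * (\<Sum>ab\<leftarrow>splits (idx_list \<alpha>). norm (pds (map g (fst ab)) (F \<beta>) y\<^sub>0) * w (snd ab))))"
    unfolding case_prod_beta
    by (intro sum_mono) (auto simp: norm_mult norm_power intro!: mult_left_mono term_bound)
  also have "\<dots> = K * B"
    by (simp add: K_def sum_distrib_left sum_distrib_right case_prod_beta mult.commute mult.left_commute)
  finally show "norm (Ptr_tx c M (\<lambda>y. A y * \<phi> y) y\<^sub>0) \<le> K * B" .
qed

section \<open>The complex \<open>\<LL>\<close>\<close>

definition tderiv :: "'m::{finite,linorder} \<Rightarrow> ('m, 'n::{finite,linorder}) fn \<Rightarrow> ('m, 'n) fn" where
  "tderiv r \<phi> = pd (axis r 1, 0) \<phi>"

definition aPtr :: "(('n::{finite,linorder} \<Rightarrow> nat) \<Rightarrow> ('n \<Rightarrow> nat) \<Rightarrow> complex) \<Rightarrow> nat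
    \<Rightarrow> ('m::{finite,linorder} \<Rightarrow> (real, 'm) vec \<Rightarrow> real) \<Rightarrow> 'm \<Rightarrow> ('m, 'n) fn \<Rightarrow> ('m, 'n) fn" where
  "aPtr c M a r \<phi> = Ptr_tx c M (\<lambda>y. complex_of_real (a r (fst y)) * \<phi> y)"

lemma Lop_eq:
  "Lop c M a u J \<phi> =
    (\<Sum>r\<in>J. ins_sign r J * (- u (J - {r}) (tderiv r \<phi>) + \<i> * u (J - {r}) (aPtr c M a r \<phi>)))"
  by (simp add: Lop_def tderiv_def aPtr_def)

lemma smooth_tderiv: "smooth \<phi> \<Longrightarrow> smooth (tderiv r \<phi>)"
  unfolding tderiv_def by (rule smooth_pd) (simp_all add: pair_zero_in_Basis)

lemma smooth_coeff:
  "smooth (a r) \<Longrightarrow> smooth (\<lambda>y::(real, 'm::finite) vec \<times> (real, 'n::finite) vec. complex_of_real (a r (fst y)))"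
  by (intro smooth_comp_fst smooth_of_real)

lemma smooth_aPtr: "smooth (a r) \<Longrightarrow> smooth \<phi> \<Longrightarrow> smooth (aPtr c M a r \<phi>)"
  unfolding aPtr_def by (intro smooth_Ptr_tx smooth_mult smooth_coeff)

lemma tderiv_lincomb:
  "smooth \<phi> \<Longrightarrow> smooth \<psi> \<Longrightarrow> tderiv r (\<lambda>y. x * \<phi> y + z * \<psi> y) y = x * tderiv r \<phi> y + z * tderiv r \<psi> y"
  unfolding tderiv_def by (intro pd_lincomb smooth_imp_differentiable)

lemma aPtr_lincomb:
  assumes "smooth (a r)" "smooth \<phi>" "smooth \<psi>"
  shows "aPtr c M a r (\<lambda>y. x * \<phi> y + z * \<psi> y) = (\<lambda>y. x * aPtr c M a r \<phi> y + z * aPtr c M a r \<psi> y)"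
proof -
  have "aPtr c M a r (\<lambda>y. x * \<phi> y + z * \<psi> y)
      = Ptr_tx c M (\<lambda>y. x * (complex_of_real (a r (fst y)) * \<phi> y) + z * (complex_of_real (a r (fst y)) * \<psi> y))"
    unfolding aPtr_def by (simp add: algebra_simps)
  then show ?thesis
    unfolding aPtr_def using assms by (simp add: Ptr_tx_lincomb smooth_mult smooth_coeff)
qed

lemma tderiv_commute: "smooth \<phi> \<Longrightarrow> tderiv r (tderiv s \<phi>) = tderiv s (tderiv r \<phi>)"
  unfolding tderiv_def by (rule pd_commute) (simp_all add: pair_zero_in_Basis)

lemma aPtr_commute:
  assumes "smooth \<phi>"
  shows "aPtr c M a r (aPtr c M a s \<phi>) = aPtr c M a s (aPtr c M a r \<phi>)"
proof -
  have "aPtr c M a s \<phi> = (\<lambda>y. complex_of_real (a s (fst y)) * Ptr_tx c M \<phi> y)" for s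
    unfolding aPtr_def using Ptr_tx_mult_fst[OF assms, of c M "\<lambda>t. complex_of_real (a s t)"] by simp
  then show ?thesis
    by (simp add: aPtr_def mult.left_commute)
qed

lemma tderiv_aPtr:
  fixes \<phi> :: "('m::{finite,linorder}, 'n::{finite,linorder}) fn"
  assumes a: "smooth (a s)" and \<phi>: "smooth \<phi>"
  shows "tderiv r (aPtr c M a s \<phi>)
    = (\<lambda>y. Ptr_tx c M (\<lambda>y. complex_of_real (pd (axis r 1) (a s) (fst y)) * \<phi> y) y + aPtr c M a s (tderiv r \<phi>) y)"
proof -
  define A :: "('m, 'n) fn" where "A = (\<lambda>y. complex_of_real (a s (fst y)))"
  define DA :: "('m, 'n) fn" where "DA = (\<lambda>y. complex_of_real (pd (axis r 1) (a s) (fst y)))"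
  have A: "smooth A" and DA: "smooth DA"
    unfolding A_def DA_def using a by (auto intro!: smooth_coeff smooth_pd)
  have "tderiv r A y = DA y" for y
    using pd_comp_fst[of "(axis r 1, 0)" "\<lambda>t. complex_of_real (a s t)" y]
      pd_of_real[OF smooth_imp_differentiable[OF a]]
    by (simp add: tderiv_def A_def DA_def)
  then have "tderiv r (\<lambda>y. A y * \<phi> y) = (\<lambda>y. 1 * (DA y * \<phi> y) + 1 * (A y * tderiv r \<phi> y))"
    using pd_mult[OF smooth_imp_differentiable[OF A] smooth_imp_differentiable[OF \<phi>]]
    by (auto simp: tderiv_def)
  moreover have "tderiv r (aPtr c M a s \<phi>) = Ptr_tx c M (tderiv r (\<lambda>y. A y * \<phi> y))"
    unfolding tderiv_def aPtr_def A_def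
    by (rule pd_Ptr_tx[OF smooth_mult[OF A[unfolded A_def] \<phi>]]) (simp_all add: pair_zero_in_Basis)
  ultimately have "tderiv r (aPtr c M a s \<phi>) = Ptr_tx c M (\<lambda>y. 1 * (DA y * \<phi> y) + 1 * (A y * tderiv r \<phi> y))"
    by (simp only:)
  also have "\<dots> = (\<lambda>y. 1 * Ptr_tx c M (\<lambda>y. DA y * \<phi> y) y + 1 * Ptr_tx c M (\<lambda>y. A y * tderiv r \<phi> y) y)"
    by (intro Ptr_tx_lincomb smooth_mult DA A \<phi> smooth_tderiv)
  finally show ?thesis
    by (simp add: aPtr_def A_def DA_def)
qed

lemma aPtr_tderiv_add_tderiv_aPtr_commute:
  assumes a: "\<And>r. smooth (a r)" and closed: "closed_1form a" and \<phi>: "smooth \<phi>"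
  shows "aPtr c M a r (tderiv s \<phi>) y + tderiv r (aPtr c M a s \<phi>) y
       = aPtr c M a s (tderiv r \<phi>) y + tderiv s (aPtr c M a r \<phi>) y"
  using closed unfolding tderiv_aPtr[OF a \<phi>] closed_1form_def by simp

lemma norm_ins_sign [simp]: "norm (ins_sign r K) = 1"
  by (simp add: ins_sign_def norm_power)

lemma ins_sign_swap_less:
  fixes J :: "'m::linorder set"
  assumes rs: "r < s" and r: "r \<in> J" and J: "finite J"
  shows "ins_sign s J * ins_sign r (J - {s}) = - (ins_sign r J * ins_sign s (J - {r}))"
proof -
  have e1: "{x \<in> J - {s}. x < r} = {x \<in> J. x < r}" and e2: "{x \<in> J - {r}. x < s} = {x \<in> J. x < s} - {r}"
    using rs by auto
  define n where "n = card {x \<in> J. x < s}"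
  have "r \<in> {x \<in> J. x < s}"
    using r rs by auto
  then have "0 < n" and c2: "card ({x \<in> J. x < s} - {r}) = n - 1"
    unfolding n_def using J by (auto simp: card_gt_0_iff)
  then have "(-1::complex) ^ n = - ((-1) ^ (n - 1))"
    by (cases n) auto
  then show ?thesis
    unfolding ins_sign_def e1 e2 c2 n_def[symmetric] by simp
qed

lemma ins_sign_swap:
  fixes J :: "'m::linorder set"
  assumes "r \<noteq> s" "r \<in> J" "s \<in> J" "finite J"
  shows "ins_sign s J * ins_sign r (J - {s}) = - (ins_sign r J * ins_sign s (J - {r}))"
proof (cases "r < s")
  case False
  with assms have "s < r"
    by auto
  from ins_sign_swap_less[OF this \<open>s \<in> J\<close> \<open>finite J\<close>] show ?thesis
    by (simp add: algebra_simps)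
qed (use ins_sign_swap_less assms in auto)

lemma Lop_Lop_eq_0:
  fixes a :: "'m::{finite,linorder} \<Rightarrow> (real, 'm) vec \<Rightarrow> real"
    and w :: "('m, 'n::{finite,linorder}) dform"
  assumes a: "\<And>r. smooth (a r)" and closed: "closed_1form a"
    and w_add: "\<And>K \<phi> \<psi>. smooth \<phi> \<Longrightarrow> smooth \<psi> \<Longrightarrow> w K (\<lambda>y. \<phi> y + \<psi> y) = w K \<phi> + w K \<psi>"
    and \<phi>: "smooth \<phi>"
  shows "Lop c M a (Lop c M a w) J \<phi> = 0"
proof -
  let ?D = "tderiv" and ?T = "aPtr c M a"
  define Q where "Q K r s = w K (?D r (?D s \<phi>)) - \<i> * w K (\<lambda>y. ?T r (?D s \<phi>) y + ?D r (?T s \<phi>) y)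
    - w K (?T r (?T s \<phi>))" for K r s
  have Q_sym: "Q K r s = Q K s r" for K r s
    unfolding Q_def tderiv_commute[OF \<phi>, of r s] aPtr_commute[OF \<phi>, of c M a r s]
      aPtr_tderiv_add_tderiv_aPtr_commute[OF a closed \<phi>, of c M r s] ..
  have inner: "- Lop c M a w K (?D s \<phi>) + \<i> * Lop c M a w K (?T s \<phi>) = (\<Sum>r\<in>K. ins_sign r K * Q (K - {r}) r s)"
    for K s
  proof -
    have "w (K - {r}) (\<lambda>y. ?T r (?D s \<phi>) y + ?D r (?T s \<phi>) y)
        = w (K - {r}) (?T r (?D s \<phi>)) + w (K - {r}) (?D r (?T s \<phi>))" for r
      by (intro w_add smooth_aPtr smooth_tderiv a \<phi>)
    then have "(\<Sum>r\<in>K. ins_sign r K * Q (K - {r}) r s)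
        = (\<Sum>r\<in>K. - (ins_sign r K * (- w (K - {r}) (?D r (?D s \<phi>)) + \<i> * w (K - {r}) (?T r (?D s \<phi>))))
             + \<i> * (ins_sign r K * (- w (K - {r}) (?D r (?T s \<phi>)) + \<i> * w (K - {r}) (?T r (?T s \<phi>)))))"
      unfolding Q_def by (intro sum.cong refl) (simp add: algebra_simps)
    then show ?thesis
      unfolding Lop_eq by (simp add: sum.distrib sum_subtractf sum_negf sum_distrib_left)
  qed
  define h where "h s r = (if r \<noteq> s \<and> r \<in> J \<and> s \<in> J
    then ins_sign s J * ins_sign r (J - {s}) * Q (J - {s} - {r}) r s else 0)" for s r
  have double_sum: "Lop c M a (Lop c M a w) J \<phi> = (\<Sum>s\<in>J. \<Sum>r\<in>J. h s r)"
  proof (unfold Lop_eq[of _ _ _ "Lop c M a w"], rule sum.cong[OF refl])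
    fix s
    assume "s \<in> J"
    have "ins_sign s J * (- Lop c M a w (J - {s}) (?D s \<phi>) + \<i> * Lop c M a w (J - {s}) (?T s \<phi>))
        = ins_sign s J * (\<Sum>r\<in>J - {s}. ins_sign r (J - {s}) * Q (J - {s} - {r}) r s)"
      by (simp only: inner)
    also have "\<dots> = (\<Sum>r\<in>J - {s}. h s r)"
      using \<open>s \<in> J\<close> by (auto simp: h_def sum_distrib_left mult.assoc intro!: sum.cong)
    also have "\<dots> = (\<Sum>r\<in>J. h s r)"
      by (intro sum.mono_neutral_left) (auto simp: h_def)
    finally show "ins_sign s J * (- Lop c M a w (J - {s}) (?D s \<phi>) + \<i> * Lop c M a w (J - {s}) (?T s \<phi>))
        = (\<Sum>r\<in>J. h s r)" .
  qed
  have antisym: "h s r = - h r s" for s r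
  proof (cases "r \<noteq> s \<and> r \<in> J \<and> s \<in> J")
    case True
    then have "h s r = ins_sign s J * ins_sign r (J - {s}) * Q (J - {s} - {r}) r s"
      "h r s = ins_sign r J * ins_sign s (J - {r}) * Q (J - {r} - {s}) s r"
      by (auto simp: h_def)
    moreover have "ins_sign s J * ins_sign r (J - {s}) = - (ins_sign r J * ins_sign s (J - {r}))"
      using True by (intro ins_sign_swap) auto
    moreover have "J - {s} - {r} = J - {r} - {s}"
      by auto
    ultimately show ?thesis
      by (simp add: Q_sym[of _ r s])
  qed (auto simp: h_def)
  then have "(\<Sum>s\<in>J. \<Sum>r\<in>J. h s r) = (\<Sum>r\<in>J. \<Sum>s\<in>J. - h r s)"
    by (subst sum.swap) (intro sum.cong refl antisym)
  then have "(\<Sum>s\<in>J. \<Sum>r\<in>J. h s r) = - (\<Sum>s\<in>J. \<Sum>r\<in>J. h s r)"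
    by (simp add: sum_negf)
  with double_sum show ?thesis
    by simp
qed

section \<open>The Dirac form\<close>

definition delta_form :: "'m set \<Rightarrow> (real, 'm::{finite,linorder}) vec \<times> (real, 'n::{finite,linorder}) vec \<Rightarrow> ('m, 'n) dform" where
  "delta_form K\<^sub>0 y\<^sub>0 K \<phi> = (if K = K\<^sub>0 then \<phi> y\<^sub>0 else 0)"

lemma Lop_delta_form:
  "Lop c M a (delta_form K\<^sub>0 y\<^sub>0) K \<phi> =
    (\<Sum>r\<in>K. if K - {r} = K\<^sub>0 then ins_sign r K * (- tderiv r \<phi> y\<^sub>0 + \<i> * aPtr c M a r \<phi> y\<^sub>0) else 0)"
  unfolding Lop_eq delta_form_def by (intro sum.cong refl) auto

lemma Lop_delta_form_insert:
  assumes "r\<^sub>0 \<notin> K\<^sub>0"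
  shows "Lop c M a (delta_form K\<^sub>0 y\<^sub>0) (insert r\<^sub>0 K\<^sub>0) \<phi> =
    ins_sign r\<^sub>0 (insert r\<^sub>0 K\<^sub>0) * (- tderiv r\<^sub>0 \<phi> y\<^sub>0 + \<i> * aPtr c M a r\<^sub>0 \<phi> y\<^sub>0)"
proof -
  have "insert r\<^sub>0 K\<^sub>0 - {r} = K\<^sub>0 \<longleftrightarrow> r = r\<^sub>0" if "r \<in> insert r\<^sub>0 K\<^sub>0" for r
    using that assms by auto
  then have "Lop c M a (delta_form K\<^sub>0 y\<^sub>0) (insert r\<^sub>0 K\<^sub>0) \<phi> = (\<Sum>r\<in>insert r\<^sub>0 K\<^sub>0.
      if r = r\<^sub>0 then ins_sign r (insert r\<^sub>0 K\<^sub>0) * (- tderiv r \<phi> y\<^sub>0 + \<i> * aPtr c M a r \<phi> y\<^sub>0) else 0)"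
    unfolding Lop_delta_form by (intro sum.cong) auto
  then show ?thesis
    by simp
qed

lemma F_dual_Lop_delta_form:
  fixes a :: "'m::{finite,linorder} \<Rightarrow> (real, 'm) vec \<Rightarrow> real"
    and c :: "('n::{finite,linorder} \<Rightarrow> nat) \<Rightarrow> ('n \<Rightarrow> nat) \<Rightarrow> complex"
  assumes a: "\<And>r. smooth (a r)"
  shows "F_dual \<mu> (Lop c M a (delta_form K\<^sub>0 y\<^sub>0) K)"
  unfolding F_dual_def
proof (intro conjI ballI allI impI)
  fix \<phi> \<psi> :: "('m, 'n) fn" and x z :: complex
  assume "\<phi> \<in> F_space \<mu>" "\<psi> \<in> F_space \<mu>"
  then have \<phi>: "smooth \<phi>" and \<psi>: "smooth \<psi>"
    by (auto intro: F_space_imp_smooth)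
  show "Lop c M a (delta_form K\<^sub>0 y\<^sub>0) K (\<lambda>y. x * \<phi> y + z * \<psi> y)
      = x * Lop c M a (delta_form K\<^sub>0 y\<^sub>0) K \<phi> + z * Lop c M a (delta_form K\<^sub>0 y\<^sub>0) K \<psi>"
    unfolding Lop_delta_form tderiv_lincomb[OF \<phi> \<psi>] aPtr_lincomb[OF a \<phi> \<psi>]
      sum_distrib_left sum.distrib[symmetric]
    by (intro sum.cong refl) (simp add: algebra_simps)
next
  fix \<sigma> C :: real
  have "\<forall>r. \<exists>k. \<forall>\<phi> B. smooth \<phi> \<longrightarrow> S_bound \<sigma> \<mu> C \<phi> B \<longrightarrow> norm (aPtr c M a r \<phi> y\<^sub>0) \<le> k * B"
  proof
    fix r
    obtain k where "\<And>\<phi> B. smooth \<phi> \<Longrightarrow> S_bound \<sigma> \<mu> C \<phi> B \<Longrightarrow>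
        norm (Ptr_tx c M (\<lambda>y. complex_of_real (a r (fst y)) * \<phi> y) y\<^sub>0) \<le> k * B"
      by (rule Ptr_tx_mult_bound[OF smooth_coeff[of a r, OF a], where \<sigma>=\<sigma> and \<mu>=\<mu> and C=C and c=c and M=M and y\<^sub>0=y\<^sub>0]) blast
    then show "\<exists>k. \<forall>\<phi> B. smooth \<phi> \<longrightarrow> S_bound \<sigma> \<mu> C \<phi> B \<longrightarrow> norm (aPtr c M a r \<phi> y\<^sub>0) \<le> k * B"
      unfolding aPtr_def by blast
  qed
  from choice[OF this] obtain k where
    k: "\<And>r \<phi> B. smooth \<phi> \<Longrightarrow> S_bound \<sigma> \<mu> C \<phi> B \<Longrightarrow> norm (aPtr c M a r \<phi> y\<^sub>0) \<le> k r * B"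
    by blast
  show "\<exists>K'. \<forall>\<phi> B. \<phi> \<in> S_space \<sigma> \<mu> C \<longrightarrow> S_bound \<sigma> \<mu> C \<phi> B \<longrightarrow>
      norm (Lop c M a (delta_form K\<^sub>0 y\<^sub>0) K \<phi>) \<le> K' * B"
  proof (intro exI allI impI)
    fix \<phi> :: "('m, 'n) fn" and B
    assume "\<phi> \<in> S_space \<sigma> \<mu> C" and SB: "S_bound \<sigma> \<mu> C \<phi> B"
    then have \<phi>: "smooth \<phi>"
      by (simp add: S_space_def)
    have "norm (- tderiv r \<phi> y\<^sub>0 + \<i> * aPtr c M a r \<phi> y\<^sub>0) \<le> (C + k r) * B" for r
      using norm_triangle_ineq[of "- tderiv r \<phi> y\<^sub>0" "\<i> * aPtr c M a r \<phi> y\<^sub>0"]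
        S_bound_pd_t[OF SB, of r y\<^sub>0] k[OF \<phi> SB, of r]
      by (simp add: tderiv_def norm_mult algebra_simps)
    also have "(C + k r) * B \<le> \<bar>C + k r\<bar> * B" for r
      using S_bound_nonneg[OF SB] by (intro mult_right_mono) auto
    finally have "norm (Lop c M a (delta_form K\<^sub>0 y\<^sub>0) K \<phi>) \<le> (\<Sum>r\<in>K. \<bar>C + k r\<bar> * B)"
      unfolding Lop_delta_form using S_bound_nonneg[OF SB]
      by (intro order_trans[OF norm_sum] sum_mono) (simp add: norm_mult)
    then show "norm (Lop c M a (delta_form K\<^sub>0 y\<^sub>0) K \<phi>) \<le> (\<Sum>r\<in>K. \<bar>C + k r\<bar>) * B"
      by (simp add: sum_distrib_right)
  qed
qed

section \<open>Exponential test functions\<close>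

definition exp_mode :: "nat \<Rightarrow> 'm \<Rightarrow> (real, 'm::finite) vec \<Rightarrow> complex" where
  "exp_mode k r t = exp (\<i> * complex_of_real (real k * t $ r))"

lemma norm_exp_mode [simp]: "norm (exp_mode k r t) = 1"
  unfolding exp_mode_def by (rule norm_exp_i_times)

lemma exp_mode_zero [simp]: "exp_mode k r 0 = 1"
  by (simp add: exp_mode_def)

lemma exp_mode_periodic: "exp_mode k r (t + (2 * pi) *\<^sub>R axis s 1) = exp_mode k r t"
proof (cases "s = r")
  case True
  have "\<i> * complex_of_real (real k * (t $ r + 2 * pi))
      = \<i> * complex_of_real (real k * t $ r) + of_nat k * (2 * of_real pi * \<i>)"
    by (simp add: algebra_simps)
  then show ?thesis
    using True by (simp add: exp_mode_def exp_add exp_of_nat_mult axis_def)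
qed (simp add: exp_mode_def axis_def)

lemma pd_exp_mode: "pd v (exp_mode k r) t = (\<i> * complex_of_real (real k * v $ r)) * exp_mode k r t"
proof (rule pd_eqI)
  define A where "A = \<i> * complex_of_real (real k * t $ r)"
  define B where "B = \<i> * complex_of_real (real k * v $ r)"
  have "((\<lambda>z. exp (A + B * z)) has_field_derivative B * exp (A + B * complex_of_real 0)) (at (complex_of_real 0))"
    by (auto intro!: derivative_eq_intros)
  then have "((\<lambda>s. exp (A + B * complex_of_real s)) has_vector_derivative B * exp (A + B * complex_of_real 0)) (at 0)"
    by (rule has_vector_derivative_real_field)
  moreover have "(\<lambda>s. exp (A + B * complex_of_real s)) = (\<lambda>s. exp_mode k r (t + s *\<^sub>R v))"
    by (simp add: exp_mode_def A_def B_def algebra_simps)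
  ultimately show "((\<lambda>s. exp_mode k r (t + s *\<^sub>R v)) has_vector_derivative B * exp_mode k r t) (at 0)"
    by (simp add: exp_mode_def A_def)
qed

lemma differentiable_exp_mode:
  fixes r :: "'m::finite"
  shows "exp_mode k r differentiable (at t)"
proof -
  have "bounded_linear (\<lambda>t::(real, 'm) vec. real k * t $ r)"
    using bounded_linear_compose[OF bounded_linear_mult_right[of "real k"] bounded_linear_vec_nth[of r]]
    by (simp add: o_def)
  from differentiable_of_real[OF bounded_linear_imp_differentiable[OF this]]
  have "(\<lambda>t::(real, 'm) vec. \<i> * complex_of_real (real k * t $ r)) differentiable (at t)"
    by (intro differentiable_mult differentiable_const)
  moreover have "exp differentiable (at z)" for z :: complex
    using DERIV_exp[of z] by (auto simp: has_field_derivative_def intro: differentiableI)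
  moreover have "exp_mode k r = exp \<circ> (\<lambda>t. \<i> * complex_of_real (real k * t $ r))"
    by (rule ext) (simp only: exp_mode_def o_def)
  ultimately show ?thesis
    using differentiable_chain_at by metis
qed

lemma pds_exp_mode:
  "pds vs (exp_mode k r) = (\<lambda>t. (\<Prod>v\<leftarrow>vs. \<i> * complex_of_real (real k * v $ r)) * exp_mode k r t)"
  by (induction vs) (auto intro!: ext simp: pd_cmult differentiable_exp_mode pd_exp_mode)

lemma smooth_exp_mode: "smooth (exp_mode k r)"
  unfolding smooth_def pds_exp_mode by (auto intro!: differentiable_mult differentiable_exp_mode)

lemma norm_pds_exp_mode_le:
  assumes "\<And>v. v \<in> set vs \<Longrightarrow> \<bar>v $ r\<bar> \<le> 1"
  shows "norm (pds vs (exp_mode k r) t) \<le> real k ^ length vs"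
  using assms
proof (induction vs)
  case (Cons v vs)
  have "norm (\<i> * complex_of_real (real k * v $ r)) \<le> real k"
    using Cons.prems[of v] by (simp add: norm_mult abs_mult mult_left_le)
  with Cons show ?case
    by (auto simp: pds_exp_mode norm_mult intro!: mult_mono)
qed simp

lemma pds_tensor_fst_directions:
  fixes E :: "'a::euclidean_space \<Rightarrow> complex" and H :: "'b::euclidean_space \<Rightarrow> complex"
  assumes E: "smooth E" and H: "smooth H" and vs: "set vs \<subseteq> Basis"
  shows "pds (map (\<lambda>v. (v, 0::'b)) vs) (\<lambda>y. E (fst y) * H (snd y)) = (\<lambda>y. pds vs E (fst y) * H (snd y))"
  using vs
proof (induction vs)
  case (Cons v vs)
  then have "pds (map (\<lambda>v. (v, 0::'b)) (v # vs)) (\<lambda>y. E (fst y) * H (snd y)) y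
      = pd (v, 0) (\<lambda>y. pds vs E (fst y) * H (snd y)) y" for y
    by simp
  also have "\<dots> y = pd (v, 0::'b) (\<lambda>y. pds vs E (fst y)) y * H (snd y) + pds vs E (fst y) * pd (v, 0::'b) (\<lambda>y. H (snd y)) y" for y
    using Cons.prems
    by (intro pd_mult differentiable_comp_fst differentiable_comp_snd differentiable_pds[OF E]
        smooth_imp_differentiable[OF H]) auto
  finally show ?case
    by (simp add: pd_comp_fst pd_comp_snd)
qed simp

lemma pds_tensor_snd_directions:
  fixes E :: "'a::euclidean_space \<Rightarrow> complex" and H :: "'b::euclidean_space \<Rightarrow> complex"
  assumes E: "smooth E" and H: "smooth H" and vs: "set vs \<subseteq> Basis"
  shows "pds (map (\<lambda>v. (0::'a, v)) vs) (\<lambda>y. E (fst y) * H (snd y)) = (\<lambda>y. E (fst y) * pds vs H (snd y))"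
  using vs
proof (induction vs)
  case (Cons v vs)
  then have "pds (map (\<lambda>v. (0::'a, v)) (v # vs)) (\<lambda>y. E (fst y) * H (snd y)) y
      = pd (0, v) (\<lambda>y. E (fst y) * pds vs H (snd y)) y" for y
    by simp
  also have "\<dots> y = pd (0::'a, v) (\<lambda>y. E (fst y)) y * pds vs H (snd y) + E (fst y) * pd (0::'a, v) (\<lambda>y. pds vs H (snd y)) y" for y
    using Cons.prems
    by (intro pd_mult differentiable_comp_fst differentiable_comp_snd differentiable_pds[OF H]
        smooth_imp_differentiable[OF E]) auto
  finally show ?case
    by (simp add: pd_comp_fst pd_comp_snd)
qed simp

lemma exp_mode_tensor_in_F_space:
  fixes h :: "(real, 'n::{finite,linorder}) vec \<Rightarrow> complex" and r :: "'m::{finite,linorder}"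
  assumes GS: "GS_half h" and mu: "\<mu> \<ge> 1/2"
  shows "(\<lambda>y. exp_mode k r (fst y) * h (snd y)) \<in> F_space \<mu>"
proof -
  obtain Ch where Ch: "Ch > 0" and h_bound: "\<And>\<alpha> \<beta> x. \<bar>mpow x \<alpha>\<bar> * norm (Dk \<beta> h x)
      \<le> Ch ^ (mabs \<alpha> + mabs \<beta> + 1) * (mfact \<alpha> * mfact \<beta>) powr (1/2)"
    using GS unfolding GS_half_def by blast
  have h: "smooth h"
    using GS unfolding GS_half_def by blast
  define C where "C = max (max 1 (real k)) Ch"
  have C: "C > 0" "real k \<le> C" "Ch \<le> C"
    unfolding C_def by auto
  define f where "f y = exp_mode k r (fst y) * h (snd y)" for y :: "(real, 'm) vec \<times> (real, 'n) vec"
  have "S_bound 2 \<mu> C f Ch"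
    unfolding S_bound_def
  proof (intro allI)
    fix \<alpha> \<beta> :: "'n \<Rightarrow> nat" and \<gamma> :: "'m \<Rightarrow> nat" and t x
    define vt where "vt = map (\<lambda>r. axis r (1::real)) (idx_list \<gamma>)"
    define vx where "vx = map (\<lambda>i. axis i (1::real)) (idx_list \<beta>)"
    define P where "P = mfact \<alpha> * mfact \<beta>"
    have vt: "set vt \<subseteq> Basis" and vx: "set vx \<subseteq> Basis"
      unfolding vt_def vx_def by auto
    have dt: "dirs_t \<gamma> = map (\<lambda>v. (v, 0::(real, 'n) vec)) vt"
      and dx: "dirs_x \<beta> = map (\<lambda>v. (0::(real, 'm) vec, v)) vx"
      unfolding dirs_t_def dirs_x_def vt_def vx_def by simp_all
    have "pds (dirs_x \<beta> @ dirs_t \<gamma>) f (t, x) = pds vt (exp_mode k r) t * Dk \<beta> h x"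
      unfolding pds_append dt dx f_def pds_tensor_fst_directions[OF smooth_exp_mode h vt]
        pds_tensor_snd_directions[OF smooth_pds[OF smooth_exp_mode vt] h vx]
      by (simp add: Dk_def vx_def)
    then have "\<bar>mpow x \<alpha>\<bar> * norm (pds (dirs_x \<beta> @ dirs_t \<gamma>) f (t, x))
        = norm (pds vt (exp_mode k r) t) * (\<bar>mpow x \<alpha>\<bar> * norm (Dk \<beta> h x))"
      by (simp add: norm_mult algebra_simps)
    also have "\<dots> \<le> C ^ mabs \<gamma> * (Ch ^ (mabs \<alpha> + mabs \<beta> + 1) * P powr (1/2))"
    proof (rule mult_mono)
      have "norm (pds vt (exp_mode k r) t) \<le> real k ^ length vt"
        by (rule norm_pds_exp_mode_le) (auto simp: vt_def axis_def)
      also have "\<dots> \<le> C ^ mabs \<gamma>"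
        using C by (simp add: vt_def length_idx_list power_mono)
      finally show "norm (pds vt (exp_mode k r) t) \<le> C ^ mabs \<gamma>" .
    qed (use h_bound[of x \<alpha> \<beta>] C in \<open>simp_all add: P_def\<close>)
    also have "\<dots> \<le> C ^ mabs \<gamma> * (Ch * C ^ (mabs \<alpha> + mabs \<beta>) * P powr \<mu>)"
    proof (intro mult_left_mono mult_mono)
      have "1 \<le> P"
        unfolding P_def using mfact_ge_1[of \<alpha>] mfact_ge_1[of \<beta>]
        by (metis mult_mono one_le_mult_iff order.trans zero_le_one mult_1)
      then show "P powr (1/2) \<le> P powr \<mu>"
        using mu by (intro powr_mono) auto
      show "Ch ^ (mabs \<alpha> + mabs \<beta> + 1) \<le> Ch * C ^ (mabs \<alpha> + mabs \<beta>)"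
        using Ch C by (simp add: power_mono)
    qed (use Ch C in simp_all)
    also have "\<dots> \<le> (Ch * C ^ (mabs \<alpha> + mabs \<beta> + mabs \<gamma>) * P powr \<mu>) * mfact \<gamma> powr 2"
    proof -
      have "1 \<le> mfact \<gamma> powr 2"
        using mfact_ge_1[of \<gamma>] by (intro ge_one_powr_ge_zero) auto
      then have "Ch * C ^ (mabs \<alpha> + mabs \<beta> + mabs \<gamma>) * P powr \<mu> * 1
          \<le> Ch * C ^ (mabs \<alpha> + mabs \<beta> + mabs \<gamma>) * P powr \<mu> * mfact \<gamma> powr 2"
        using Ch C by (intro mult_left_mono) auto
      then show ?thesis
        by (simp add: power_add algebra_simps)
    qed
    finally show "\<bar>mpow x \<alpha>\<bar> * norm (pds (dirs_x \<beta> @ dirs_t \<gamma>) f (t, x))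
        \<le> Ch * C ^ (mabs \<alpha> + mabs \<beta> + mabs \<gamma>) * mfact \<gamma> powr 2 * (mfact \<alpha> * mfact \<beta>) powr \<mu>"
      by (simp add: P_def algebra_simps)
  qed
  moreover have "smooth f"
    unfolding f_def by (intro smooth_mult smooth_comp_fst smooth_comp_snd smooth_exp_mode h)
  moreover have "t_periodic f"
    unfolding t_periodic_def f_def by (simp add: exp_mode_periodic)
  ultimately have "f \<in> S_space 2 \<mu> C"
    unfolding S_space_def by blast
  then show ?thesis
    unfolding F_space_def f_def using C by force
qed

lemma norm_pairing_tensor_le:
  fixes f :: "('m::finite, 'n::finite) fn" and h :: "(real, 'n) vec \<Rightarrow> complex"
  assumes "\<And>t. norm (E t) = 1"
  shows "norm (pairing f (\<lambda>y. E (fst y) * h (snd y)))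
    \<le> (LINT y:(cbox (0::(real, 'm) vec) (\<chi> r. 2*pi) \<times> UNIV)|lborel. norm (f y) * norm (h (snd y)))"
proof -
  let ?S = "cbox (0::(real, 'm) vec) (\<chi> r. 2*pi) \<times> (UNIV :: (real, 'n) vec set)"
  have "norm (pairing f (\<lambda>y. E (fst y) * h (snd y)))
      \<le> (LINT y|lborel. norm (indicator ?S y *\<^sub>R (f y * (E (fst y) * h (snd y)))))"
    unfolding pairing_def set_lebesgue_integral_def by (rule integral_norm_bound)
  also have "\<dots> = (LINT y|lborel. indicator ?S y *\<^sub>R (norm (f y) * norm (h (snd y))))"
    by (rule Bochner_Integration.integral_cong) (auto simp: norm_mult indicator_def assms)
  finally show ?thesis
    by (simp add: set_lebesgue_integral_def)
qed

lemma Lop_delta_form_not_represented: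
  fixes h :: "(real, 'n::{finite,linorder}) vec \<Rightarrow> complex" and r\<^sub>0 :: "'m::{finite,linorder}"
  assumes GS: "GS_half h" and h: "h x\<^sub>0 \<noteq> 0" and mu: "\<mu> \<ge> 1/2" and r\<^sub>0: "r\<^sub>0 \<notin> K\<^sub>0"
  shows "\<not> represented_by_F \<mu> (Lop c M a (delta_form K\<^sub>0 (0, x\<^sub>0)) (insert r\<^sub>0 K\<^sub>0))"
proof
  assume "represented_by_F \<mu> (Lop c M a (delta_form K\<^sub>0 (0, x\<^sub>0)) (insert r\<^sub>0 K\<^sub>0))"
  then obtain f where f: "\<And>\<phi>. \<phi> \<in> F_space \<mu> \<Longrightarrow> Lop c M a (delta_form K\<^sub>0 (0, x\<^sub>0)) (insert r\<^sub>0 K\<^sub>0) \<phi> = pairing f \<phi>"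
    unfolding represented_by_F_def by blast
  define R where "R = (LINT y:(cbox (0::(real, 'm) vec) (\<chi> r. 2*pi) \<times> UNIV)|lborel. norm (f y) * norm (h (snd y)))"
  define Z where "Z = Ptr c M (\<lambda>x. complex_of_real (a r\<^sub>0 0) * h x) x\<^sub>0"
  define \<phi> where "\<phi> k y = exp_mode k r\<^sub>0 (fst y) * h (snd y)" for k and y :: "(real, 'm) vec \<times> (real, 'n) vec"
  have "real k * norm (h x\<^sub>0) \<le> R + norm Z" for k
  proof -
    have "smooth h"
      using GS unfolding GS_half_def by blast
    from pds_tensor_fst_directions[OF smooth_exp_mode this, of "[axis r\<^sub>0 1]" k r\<^sub>0]
    have "tderiv r\<^sub>0 (\<phi> k) = (\<lambda>y. pd (axis r\<^sub>0 1) (exp_mode k r\<^sub>0) (fst y) * h (snd y))"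
      by (simp add: tderiv_def \<phi>_def[abs_def])
    then have "tderiv r\<^sub>0 (\<phi> k) (0, x\<^sub>0) = \<i> * of_nat k * h x\<^sub>0"
      by (simp add: pd_exp_mode)
    moreover have "aPtr c M a r\<^sub>0 (\<phi> k) (0, x\<^sub>0) = Z"
      by (simp add: aPtr_def Ptr_tx_def \<phi>_def Z_def)
    ultimately have "Lop c M a (delta_form K\<^sub>0 (0, x\<^sub>0)) (insert r\<^sub>0 K\<^sub>0) (\<phi> k)
        = (ins_sign r\<^sub>0 (insert r\<^sub>0 K\<^sub>0) * \<i>) * (Z - of_nat k * h x\<^sub>0)"
      by (simp add: Lop_delta_form_insert[OF r\<^sub>0] algebra_simps)
    then have "norm (Lop c M a (delta_form K\<^sub>0 (0, x\<^sub>0)) (insert r\<^sub>0 K\<^sub>0) (\<phi> k)) = norm (of_nat k * h x\<^sub>0 - Z)"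
      by (simp add: norm_mult norm_minus_commute)
    moreover have "norm (pairing f (\<phi> k)) \<le> R"
      unfolding \<phi>_def R_def by (rule norm_pairing_tensor_le) simp
    moreover have "\<phi> k \<in> F_space \<mu>"
      unfolding \<phi>_def by (rule exp_mode_tensor_in_F_space[OF GS mu])
    ultimately show ?thesis
      using f norm_triangle_ineq2[of "of_nat k * h x\<^sub>0" Z] by (simp add: norm_mult)
  qed
  moreover obtain k :: nat where "(R + norm Z) / norm (h x\<^sub>0) < real k"
    using reals_Archimedean2 by blast
  ultimately show False
    using h by (simp add: field_simps) (meson not_le)
qed

lemma real_spectral_basis_obtains_GS_half:
  fixes c :: "('n::{finite,linorder} \<Rightarrow> nat) \<Rightarrow> ('n \<Rightarrow> nat) \<Rightarrow> complex"
  assumes "real_spectral_basis c M"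
  obtains h :: "(real, 'n) vec \<Rightarrow> complex" and x\<^sub>0 where "GS_half h" "h x\<^sub>0 \<noteq> 0"
proof -
  obtain \<phi> :: "nat \<Rightarrow> (real, 'n) vec \<Rightarrow> complex" where
    "\<forall>j. GS_half (\<phi> j)" "\<forall>j k. (LINT x|lborel. \<phi> j x * cnj (\<phi> k x)) = (if j = k then 1 else 0)"
    using assms unfolding real_spectral_basis_def by blast
  then have "GS_half (\<phi> 0)" "(LINT x|lborel. \<phi> 0 x * cnj (\<phi> 0 x)) = 1"
    by auto
  moreover have "\<exists>x\<^sub>0. \<phi> 0 x\<^sub>0 \<noteq> 0"
  proof (rule ccontr)
    assume "\<nexists>x\<^sub>0. \<phi> 0 x\<^sub>0 \<noteq> 0"
    then have "(\<lambda>x. \<phi> 0 x * cnj (\<phi> 0 x)) = (\<lambda>_. 0)"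
      by auto
    with \<open>(LINT x|lborel. \<phi> 0 x * cnj (\<phi> 0 x)) = 1\<close> show False
      by simp
  qed
  ultimately show ?thesis
    using that by blast
qed

theorem theorem5p2:
  fixes a :: "'m::{finite,linorder} \<Rightarrow> (real, 'm) vec \<Rightarrow> real"
    and c :: "('n::{finite,linorder} \<Rightarrow> nat) \<Rightarrow> ('n \<Rightarrow> nat) \<Rightarrow> complex"
    and M p :: nat and \<sigma> \<mu> :: real
  assumes m2: "CARD('m) \<ge> 2"
    and p_range: "1 \<le> p" "p \<le> CARD('m) - 1"
    and sigma: "\<sigma> > 1"
    and a_gevrey: "\<forall>r. gevrey_torus \<sigma> (a r)"
    and a_closed: "closed_1form a"
    and M2: "M \<ge> 2"
    and c_order: "\<forall>\<alpha> \<beta>. mabs \<alpha> + mabs \<beta> > M \<longrightarrow> c \<alpha> \<beta> = 0"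
    and P_elliptic: "globally_elliptic c M"
    and P_normal: "normal_op c M"
    and P_spectrum: "real_spectral_basis c M"
    and mu: "\<mu> \<ge> 1/2"
  shows "\<exists>u :: ('m, 'n) dform.
           F_dual_form \<mu> p u \<and> \<not> F_form \<mu> p u \<and> F_form \<mu> (p + 1) (Lop c M a u)"
proof -
  have a: "smooth (a r)" for r
    using a_gevrey unfolding gevrey_torus_def by blast
  obtain h :: "(real, 'n) vec \<Rightarrow> complex" and x\<^sub>0 where h: "GS_half h" "h x\<^sub>0 \<noteq> 0"
    using real_spectral_basis_obtains_GS_half[OF P_spectrum] .
  have "p \<le> CARD('m)"
    using p_range by simp
  then obtain K :: "'m set" where K: "card K = p"
    by (meson obtain_subset_with_card_n)
  with p_range obtain r\<^sub>0 where r\<^sub>0: "r\<^sub>0 \<in> K"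
    by (metis card.empty ex_in_conv not_one_le_zero)
  define u where "u = Lop c M a (delta_form (K - {r\<^sub>0}) (0, x\<^sub>0))"
  have dual: "F_dual_form \<mu> p u"
    unfolding F_dual_form_def u_def using F_dual_Lop_delta_form[where a=a, OF a] by blast
  have "\<not> represented_by_F \<mu> (u K)"
    using Lop_delta_form_not_represented[OF h mu, of r\<^sub>0 "K - {r\<^sub>0}" c M a] insert_Diff[OF r\<^sub>0]
    unfolding u_def by simp
  then have not_function: "\<not> F_form \<mu> p u"
    using K unfolding F_form_def by blast
  have "Lop c M a u J \<phi> = pairing (\<lambda>_. 0) \<phi>" if "\<phi> \<in> F_space \<mu>" for J \<phi>
    using Lop_Lop_eq_0[OF a a_closed _ F_space_imp_smooth[OF that]]
    by (simp add: u_def delta_form_def pairing_def)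
  then have "F_form \<mu> (p + 1) (Lop c M a u)"
    unfolding F_form_def represented_by_F_def using zero_in_F_space by blast
  with dual not_function show ?thesis
    by blast
qed

end
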